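(* Let $H=\sum_Z H_Z$ be a Hamiltonian on a lattice of $V$ sites with range $R$ and interaction strength $J$, with nondegenerate ground state $\Psi_0$ of energy $E_0=0$, and suppose its second smallest eigenvalue is at least $\lambda_{min}>0$. Then $H$ has an $(R,2\sqrt{JV/\lambda_{min}})$ unique ground state.
   Context: Range $R$ and interaction strength $J$: each $H_Z$ is Hermitian and supported on a set $Z$ of diameter at most $R$, and $\sup_i\sum_{Z\ni i}\Vert H_Z\Vert\le J$. $P_0=|\Psi_0\rangle\langle\Psi_0|$. $\Vert\cdot\Vert_1$ is the trace norm, $\overline A$ the complement of $A$, ${\rm Tr}_{\overline A}$ the partial trace over $\overline A$. Definition: $H$ has an $(l,\tau)$ unique ground state if for all $\epsilon\ge0$ and every density matrix $\rho$ such that $\Vert{\rm Tr}_{\overline A}(\rho-P_0)\Vert_1\le\epsilon$ for all sets $A$ with ${\rm diam}(A)\le l$, one has $\Vert\rho-P_0\Vert_1\le\tau\sqrt\epsilon$. *)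

theory Defs
  imports "HOL-Analysis.Analysis"
begin

text \<open>Finite-dimensional matrices and vectors over complex numbers, indexed by a finite
  carrier set S of basis labels. A matrix is a function 'i => 'i => complex, only its
  entries on S x S are relevant.\<close>

definition mmult :: "'i set \<Rightarrow> ('i \<Rightarrow> 'i \<Rightarrow> complex) \<Rightarrow> ('i \<Rightarrow> 'i \<Rightarrow> complex) \<Rightarrow> ('i \<Rightarrow> 'i \<Rightarrow> complex)" where
  "mmult S X Y = (\<lambda>a b. \<Sum>c\<in>S. X a c * Y c b)"

definition adj :: "('i \<Rightarrow> 'i \<Rightarrow> complex) \<Rightarrow> ('i \<Rightarrow> 'i \<Rightarrow> complex)" where
  "adj X = (\<lambda>a b. cnj (X b a))"

definition mtrace :: "'i set \<Rightarrow> ('i \<Rightarrow> 'i \<Rightarrow> complex) \<Rightarrow> complex" where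
  "mtrace S X = (\<Sum>a\<in>S. X a a)"

definition hermitian_on :: "'i set \<Rightarrow> ('i \<Rightarrow> 'i \<Rightarrow> complex) \<Rightarrow> bool" where
  "hermitian_on S X \<longleftrightarrow> (\<forall>a\<in>S. \<forall>b\<in>S. X a b = cnj (X b a))"

definition psd_on :: "'i set \<Rightarrow> ('i \<Rightarrow> 'i \<Rightarrow> complex) \<Rightarrow> bool" where
  "psd_on S X \<longleftrightarrow> hermitian_on S X \<and>
     (\<forall>v::'i \<Rightarrow> complex. 0 \<le> Re (\<Sum>a\<in>S. \<Sum>b\<in>S. cnj (v a) * X a b * v b))"

definition psd_sqrt :: "'i set \<Rightarrow> ('i \<Rightarrow> 'i \<Rightarrow> complex) \<Rightarrow> ('i \<Rightarrow> 'i \<Rightarrow> complex)" where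
  "psd_sqrt S Y = (THE R. psd_on S R \<and> (\<forall>a b. (a \<notin> S \<or> b \<notin> S) \<longrightarrow> R a b = 0)
                         \<and> (\<forall>a\<in>S. \<forall>b\<in>S. mmult S R R a b = Y a b))"

definition trace_norm :: "'i set \<Rightarrow> ('i \<Rightarrow> 'i \<Rightarrow> complex) \<Rightarrow> real" where
  "trace_norm S X = Re (mtrace S (psd_sqrt S (mmult S (adj X) X)))"

definition vnorm :: "'i set \<Rightarrow> ('i \<Rightarrow> complex) \<Rightarrow> real" where
  "vnorm S v = sqrt (\<Sum>a\<in>S. (cmod (v a))\<^sup>2)"

definition mapply :: "'i set \<Rightarrow> ('i \<Rightarrow> 'i \<Rightarrow> complex) \<Rightarrow> ('i \<Rightarrow> complex) \<Rightarrow> ('i \<Rightarrow> complex)" where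
  "mapply S X v = (\<lambda>a. \<Sum>b\<in>S. X a b * v b)"

definition opnorm :: "'i set \<Rightarrow> ('i \<Rightarrow> 'i \<Rightarrow> complex) \<Rightarrow> real" where
  "opnorm S X = Sup {vnorm S (mapply S X v) | v. vnorm S v \<le> 1}"

text \<open>Spin systems: sites of finite type 's (V = CARD('s)), local basis of finite type 'q.
  Global basis = configurations 's => 'q. Basis of the subsystem on sites A:
  configurations on A, i.e. PiE A (\<lambda>_. UNIV).\<close>

definition configs :: "'s set \<Rightarrow> ('s \<Rightarrow> 'q) set" where
  "configs A = PiE A (\<lambda>_. UNIV)"

definition merge :: "'s set \<Rightarrow> ('s \<Rightarrow> 'q) \<Rightarrow> ('s \<Rightarrow> 'q) \<Rightarrow> ('s \<Rightarrow> 'q)" where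
  "merge A \<sigma> \<omega> = (\<lambda>i. if i \<in> A then \<sigma> i else \<omega> i)"

definition ptrace :: "'s set \<Rightarrow> (('s \<Rightarrow> 'q) \<Rightarrow> ('s \<Rightarrow> 'q) \<Rightarrow> complex) \<Rightarrow> (('s \<Rightarrow> 'q) \<Rightarrow> ('s \<Rightarrow> 'q) \<Rightarrow> complex)" where
  "ptrace A X = (\<lambda>\<sigma> \<tau>. \<Sum>\<omega>\<in>configs (- A). X (merge A \<sigma> \<omega>) (merge A \<tau> \<omega>))"

text \<open>M is supported on Z: M = m \<otimes> Id on the complement of Z.\<close>
definition supported_on :: "'s set \<Rightarrow> (('s \<Rightarrow> 'q) \<Rightarrow> ('s \<Rightarrow> 'q) \<Rightarrow> complex) \<Rightarrow> bool" where
  "supported_on Z M \<longleftrightarrow> (\<exists>m. \<forall>\<sigma> \<tau>. M \<sigma> \<tau> =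
      (if (\<forall>i. i \<notin> Z \<longrightarrow> \<sigma> i = \<tau> i) then m (restrict \<sigma> Z) (restrict \<tau> Z) else 0))"

definition hamiltonian :: "('s::finite set \<Rightarrow> (('s \<Rightarrow> 'q) \<Rightarrow> ('s \<Rightarrow> 'q) \<Rightarrow> complex)) \<Rightarrow> (('s \<Rightarrow> 'q) \<Rightarrow> ('s \<Rightarrow> 'q) \<Rightarrow> complex)" where
  "hamiltonian h = (\<lambda>\<sigma> \<tau>. \<Sum>Z\<in>UNIV. h Z \<sigma> \<tau>)"

definition projector :: "('i \<Rightarrow> complex) \<Rightarrow> ('i \<Rightarrow> 'i \<Rightarrow> complex)" where
  "projector \<psi> = (\<lambda>a b. \<psi> a * cnj (\<psi> b))"

definition density_matrix :: "(('s::finite \<Rightarrow> 'q::finite) \<Rightarrow> ('s \<Rightarrow> 'q) \<Rightarrow> complex) \<Rightarrow> bool" where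
  "density_matrix \<rho> \<longleftrightarrow> psd_on UNIV \<rho> \<and> mtrace UNIV \<rho> = 1"

definition unique_gs :: "real \<Rightarrow> real \<Rightarrow> (('s::{finite,metric_space} \<Rightarrow> 'q::finite) \<Rightarrow> complex) \<Rightarrow> bool" where
  "unique_gs l t \<Psi>0 \<longleftrightarrow>
     (\<forall>\<epsilon>::real. \<forall>\<rho>. \<epsilon> \<ge> 0 \<and> density_matrix \<rho> \<and>
        (\<forall>A::'s set. diameter A \<le> l \<longrightarrow>
            trace_norm (configs A) (ptrace A (\<lambda>a b. \<rho> a b - projector \<Psi>0 a b)) \<le> \<epsilon>)
        \<longrightarrow> trace_norm UNIV (\<lambda>a b. \<rho> a b - projector \<Psi>0 a b) \<le> t * sqrt \<epsilon>)"

end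

theory Submission
  imports Defs
begin

text \<open>
  For a pure state, \<open>\<parallel>\<rho> - |\<Psi>0\<rangle>\<langle>\<Psi>0|\<parallel>\<^sub>1 \<le> 2 \<surd>(1 - F)\<close> with fidelity \<open>F = \<langle>\<Psi>0|\<rho>|\<Psi>0\<rangle>\<close>,
  so it suffices to bound the infidelity. The gap gives \<open>lmin (1 - F) \<le> Tr(\<rho> H)\<close>, and since
  \<open>H \<Psi>0 = 0\<close> this energy equals \<open>\<Sum>\<^sub>Z Tr((\<rho> - |\<Psi>0\<rangle>\<langle>\<Psi>0|) H\<^sub>Z)\<close>. As \<open>H\<^sub>Z\<close> acts only on \<open>Z\<close>,
  its term is a trace against the partial trace on \<open>Z\<close>, hence at most \<open>\<parallel>H\<^sub>Z\<parallel> \<epsilon>\<close>; weighting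
  each term by \<open>|Z| \<ge> 1\<close> and counting it once per site bounds the sum by \<open>J V \<epsilon>\<close>.
\<close>

section \<open>Inner products and Hermitian matrices\<close>

definition cinner :: "'i set \<Rightarrow> ('i \<Rightarrow> complex) \<Rightarrow> ('i \<Rightarrow> complex) \<Rightarrow> complex" where
  "cinner S u v = (\<Sum>a\<in>S. cnj (u a) * v a)"

lemma cinner_add_right: "cinner S u (\<lambda>a. v a + w a) = cinner S u v + cinner S u w"
  by (simp add: cinner_def distrib_left sum.distrib)

lemma cinner_diff_right: "cinner S u (\<lambda>a. v a - w a) = cinner S u v - cinner S u w"
  by (simp add: cinner_def right_diff_distrib sum_subtractf)

lemma cinner_scale_right: "cinner S u (\<lambda>a. c * v a) = c * cinner S u v"
  by (simp add: cinner_def sum_distrib_left mult_ac)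

lemma cinner_sum_right: "cinner S u (\<lambda>a. \<Sum>e\<in>E. c e * g e a) = (\<Sum>e\<in>E. c e * cinner S u (g e))"
  unfolding cinner_def by (simp add: sum_distrib_left sum.swap[of _ S] mult_ac)

lemma cinner_add_left: "cinner S (\<lambda>a. u a + w a) v = cinner S u v + cinner S w v"
  by (simp add: cinner_def distrib_right sum.distrib)

lemma cinner_diff_left: "cinner S (\<lambda>a. u a - w a) v = cinner S u v - cinner S w v"
  by (simp add: cinner_def left_diff_distrib sum_subtractf)

lemma cinner_scale_left: "cinner S (\<lambda>a. c * u a) v = cnj c * cinner S u v"
  by (simp add: cinner_def sum_distrib_left mult_ac)

lemma cnj_cinner: "cnj (cinner S u v) = cinner S v u"
  by (simp add: cinner_def mult.commute)

lemma cmod_cinner_commute: "cmod (cinner S u v) = cmod (cinner S v u)"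
  by (metis complex_mod_cnj cnj_cinner)

lemma cinner_cong:
  "(\<And>a. a \<in> S \<Longrightarrow> u a = u' a) \<Longrightarrow> (\<And>a. a \<in> S \<Longrightarrow> v a = v' a) \<Longrightarrow> cinner S u v = cinner S u' v'"
  by (simp add: cinner_def)

lemma cinner_self: "cinner S v v = of_real (\<Sum>a\<in>S. (cmod (v a))\<^sup>2)"
proof -
  have "\<And>a. cnj (v a) * v a = of_real ((cmod (v a))\<^sup>2)"
    by (metis complex_norm_square mult.commute)
  then show ?thesis by (simp add: cinner_def)
qed

lemma cinner_self_eq_Re: "cinner S v v = of_real (Re (cinner S v v))"
  by (simp add: cinner_self)

lemma cinner_self_nonneg: "Re (cinner S v v) \<ge> 0"
  by (simp add: cinner_self sum_nonneg)

lemma cinner_self_eq_0D: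
  assumes "finite S" "Re (cinner S v v) = 0" "a \<in> S"
  shows "v a = 0"
proof -
  have "(\<Sum>a\<in>S. (cmod (v a))\<^sup>2) = 0" using assms(2) by (simp add: cinner_self)
  then have "(cmod (v a))\<^sup>2 = 0" using assms sum_nonneg_eq_0_iff[of S "\<lambda>a. (cmod (v a))\<^sup>2"] by auto
  then show ?thesis by simp
qed

lemma cmod_cinner_square: "cinner S u v * cinner S v u = of_real ((cmod (cinner S u v))\<^sup>2)"
  by (metis complex_norm_square cnj_cinner)

lemma mapply_add: "mapply S X (\<lambda>a. v a + w a) = (\<lambda>a. mapply S X v a + mapply S X w a)"
  by (simp add: mapply_def distrib_left sum.distrib)

lemma mapply_scale: "mapply S X (\<lambda>a. c * v a) = (\<lambda>a. c * mapply S X v a)"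
  by (simp add: mapply_def sum_distrib_left mult_ac)

lemma mapply_mmult: "mapply S (mmult S X Y) v = mapply S X (mapply S Y v)"
proof
  fix a
  have "mapply S X (mapply S Y v) a = (\<Sum>c\<in>S. \<Sum>b\<in>S. X a c * (Y c b * v b))"
    unfolding mapply_def by (simp add: sum_distrib_left)
  also have "\<dots> = (\<Sum>b\<in>S. \<Sum>c\<in>S. X a c * (Y c b * v b))" by (rule sum.swap)
  also have "\<dots> = mapply S (mmult S X Y) v a"
    unfolding mapply_def mmult_def by (simp add: sum_distrib_left sum_distrib_right mult_ac)
  finally show "mapply S (mmult S X Y) v a = mapply S X (mapply S Y v) a" ..
qed

lemma hermitian_cinner_mapply:
  assumes "hermitian_on S X"
  shows "cinner S u (mapply S X v) = cinner S (mapply S X u) v"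
proof -
  have "cinner S u (mapply S X v) = (\<Sum>a\<in>S. \<Sum>b\<in>S. cnj (u a) * X a b * v b)"
    by (simp add: cinner_def mapply_def sum_distrib_left mult_ac)
  also have "\<dots> = (\<Sum>b\<in>S. \<Sum>a\<in>S. cnj (u a) * X a b * v b)" by (rule sum.swap)
  also have "\<dots> = (\<Sum>b\<in>S. \<Sum>a\<in>S. cnj (X b a * u a) * v b)"
  proof (intro sum.cong refl)
    fix a b assume "a \<in> S" "b \<in> S"
    then have "X a b = cnj (X b a)" using assms unfolding hermitian_on_def by blast
    then show "cnj (u a) * X a b * v b = cnj (X b a * u a) * v b" by (simp add: mult.commute)
  qed
  also have "\<dots> = cinner S (mapply S X u) v"
    unfolding cinner_def mapply_def by (simp add: sum_distrib_right)
  finally show ?thesis .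
qed

lemma hermitian_quadratic_real:
  assumes "hermitian_on S X" shows "Im (cinner S v (mapply S X v)) = 0"
  by (metis assms cnj_cinner hermitian_cinner_mapply Reals_cnj_iff complex_is_Real_iff)

lemma psd_quadratic_nonneg: "psd_on S R \<Longrightarrow> Re (cinner S v (mapply S R v)) \<ge> 0"
  unfolding psd_on_def cinner_def mapply_def by (simp add: sum_distrib_left mult_ac)

section \<open>The spectral theorem\<close>

definition orthonormal_on :: "'i set \<Rightarrow> ('i \<Rightarrow> complex) set \<Rightarrow> bool" where
  "orthonormal_on S E \<longleftrightarrow> finite E \<and> (\<forall>e\<in>E. \<forall>a. a \<notin> S \<longrightarrow> e a = 0)
     \<and> (\<forall>e\<in>E. \<forall>f\<in>E. cinner S e f = (if e = f then 1 else 0))"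

definition unit_orth_compl :: "'i set \<Rightarrow> ('i \<Rightarrow> complex) set \<Rightarrow> ('i \<Rightarrow> complex) set" where
  "unit_orth_compl S E = {v. (\<forall>a. a \<notin> S \<longrightarrow> v a = 0) \<and> cinner S v v = 1 \<and> (\<forall>e\<in>E. cinner S e v = 0)}"

lemma normalized_in_unit_orth_compl:
  assumes "\<forall>a. a \<notin> S \<longrightarrow> v a = 0" "\<forall>e\<in>E. cinner S e v = 0" "Re (cinner S v v) > 0"
  shows "(\<lambda>a. of_real (1 / sqrt (Re (cinner S v v))) * v a) \<in> unit_orth_compl S E"
proof -
  define r where "r = 1 / sqrt (Re (cinner S v v))"
  have "r * r * Re (cinner S v v) = 1" using assms(3) by (simp add: r_def field_simps)
  then have "cinner S (\<lambda>a. of_real r * v a) (\<lambda>a. of_real r * v a) = 1"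
    unfolding cinner_scale_left cinner_scale_right
    by (metis cinner_self_eq_Re complex_cnj_complex_of_real of_real_1 of_real_mult mult.assoc)
  moreover have "\<forall>e\<in>E. cinner S e (\<lambda>a. of_real r * v a) = 0"
    using assms(2) by (simp add: cinner_scale_right)
  ultimately show ?thesis
    using assms(1) unfolding unit_orth_compl_def r_def[symmetric] by simp
qed

lemma orthonormal_card_le:
  fixes E :: "('i::finite \<Rightarrow> complex) set"
  assumes orth: "\<forall>e\<in>E. \<forall>f\<in>E. cinner S e f = (if e = f then 1 else 0)"
  shows "finite E \<and> card E \<le> DIM(complex^'i)"
proof -
  define V where "V = (vec_lambda ` E :: (complex^'i) set)"
  have inj: "inj_on vec_lambda E"
    by (rule inj_onI) (metis vec_lambda_beta ext)
  have nth: "\<And>e. vec_nth (vec_lambda e) = e" by (rule ext) simp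
  have "independent V"
  proof
    assume "dependent V"
    then obtain T u v where T: "finite T" "T \<subseteq> V" "(\<Sum>w\<in>T. u w *\<^sub>R w) = 0"
      and v: "v \<in> T" "u v \<noteq> 0"
      unfolding real_vector.dependent_explicit by blast
    obtain e0 where e0: "e0 \<in> E" "v = vec_lambda e0" using T v V_def by blast
    have comp: "(\<Sum>w\<in>T. of_real (u w) * (w $ a)) = 0" for a
    proof -
      have "(\<Sum>w\<in>T. u w *\<^sub>R (w $ a)) = 0" using arg_cong[OF T(3), of "\<lambda>x. x$a"] by simp
      then show ?thesis by (simp add: scaleR_conv_of_real)
    qed
    have "0 = (\<Sum>a\<in>S. cnj (e0 a) * (\<Sum>w\<in>T. of_real (u w) * (w $ a)))"
      using comp by simp
    also have "\<dots> = (\<Sum>w\<in>T. of_real (u w) * cinner S e0 (vec_nth w))"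
      unfolding cinner_def by (simp add: sum_distrib_left sum_distrib_right mult_ac sum.swap[of _ S])
    also have "\<dots> = (\<Sum>w\<in>T. if w = v then of_real (u w) else 0)"
    proof (rule sum.cong[OF refl])
      fix w assume "w \<in> T"
      then obtain f where f: "f \<in> E" "w = vec_lambda f" using T V_def by blast
      have "(w = v) = (f = e0)" using f e0 inj by (metis nth)
      then show "of_real (u w) * cinner S e0 (vec_nth w) = (if w = v then of_real (u w) else 0)"
        using orth f e0 by (auto simp: nth)
    qed
    also have "\<dots> = of_real (u v)" using T v by (simp add: sum.delta')
    finally show False using v by simp
  qed
  then have "finite V \<and> card V \<le> DIM(complex^'i)" by (rule independent_bound)
  then show ?thesis using inj V_def finite_image_iff card_image by metis
qed

lemma compact_unit_orth_compl:
  fixes S :: "'i::finite set"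
  shows "compact {x::complex^'i. vec_nth x \<in> unit_orth_compl S E}"
proof -
  define K where "K = {x::complex^'i. vec_nth x \<in> unit_orth_compl S E}"
  have "K = (\<Inter>a. {x. (if a \<in> S then 0 else x$a) = 0}) \<inter> {x. (\<Sum>a\<in>S. cnj (x$a) * x$a) = 1}
            \<inter> (\<Inter>e\<in>E. {x. (\<Sum>a\<in>S. cnj (e a) * x$a) = 0})"
    unfolding K_def unit_orth_compl_def cinner_def by auto
  moreover have "closed {x::complex^'i. (if a \<in> S then 0 else x$a) = 0}" for a
    by (cases "a \<in> S") (auto intro!: closed_Collect_eq continuous_intros)
  moreover have "closed {x::complex^'i. (\<Sum>a\<in>S. cnj (x$a) * x$a) = 1}"
    by (intro closed_Collect_eq continuous_intros)
  moreover have "closed {x::complex^'i. (\<Sum>a\<in>S. cnj (e a) * x$a) = 0}" for e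
    by (intro closed_Collect_eq continuous_intros)
  ultimately have "closed K" by (simp add: closed_INT closed_Int)
  moreover have "norm x \<le> 1" if "x \<in> K" for x
  proof -
    have "(\<Sum>a\<in>S. (cmod (x$a))\<^sup>2) = 1"
      using that unfolding K_def unit_orth_compl_def cinner_self by (simp only: mem_Collect_eq of_real_eq_1_iff)
    moreover have "(\<Sum>a\<in>UNIV. (norm (x$a))\<^sup>2) = (\<Sum>a\<in>S. (cmod (x$a))\<^sup>2)"
      using that unfolding K_def unit_orth_compl_def by (intro sum.mono_neutral_right) auto
    ultimately show ?thesis unfolding norm_vec_def L2_set_def by simp
  qed
  then have "bounded K" unfolding bounded_iff by blast
  ultimately show ?thesis unfolding K_def[symmetric] using compact_eq_bounded_closed by blast
qed

lemma rayleigh_max_exists: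
  fixes S :: "'i::finite set"
  assumes "unit_orth_compl S E \<noteq> {}"
  shows "\<exists>v\<in>unit_orth_compl S E. \<forall>w\<in>unit_orth_compl S E.
           Re (cinner S w (mapply S X w)) \<le> Re (cinner S v (mapply S X v))"
proof -
  define f where "f x = Re (cinner S (vec_nth x) (mapply S X (vec_nth x)))" for x :: "complex^'i"
  have "continuous_on {x. vec_nth x \<in> unit_orth_compl S E} f"
    unfolding f_def cinner_def mapply_def by (intro continuous_intros)
  moreover have "{x::complex^'i. vec_nth x \<in> unit_orth_compl S E} \<noteq> {}"
  proof -
    obtain v where "v \<in> unit_orth_compl S E" using assms by blast
    then have "vec_lambda v \<in> {x::complex^'i. vec_nth x \<in> unit_orth_compl S E}"
      by (simp add: vec_lambda_inverse)
    then show ?thesis by blast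
  qed
  ultimately obtain x where x: "vec_nth x \<in> unit_orth_compl S E"
    and max: "\<And>y. vec_nth y \<in> unit_orth_compl S E \<Longrightarrow> f y \<le> f x"
    using continuous_attains_sup[OF compact_unit_orth_compl] by blast
  show ?thesis
  proof (intro bexI ballI)
    fix w assume "w \<in> unit_orth_compl S E"
    then show "Re (cinner S w (mapply S X w)) \<le> Re (cinner S (vec_nth x) (mapply S X (vec_nth x)))"
      using max[of "vec_lambda w"] unfolding f_def by (simp add: vec_lambda_inverse)
  qed (rule x)
qed

lemma linear_coeff_nonpos:
  fixes b c :: real
  assumes "\<And>t. t > 0 \<Longrightarrow> 2 * t * b + t\<^sup>2 * c \<le> 0"
  shows "b \<le> 0"
proof (rule ccontr)
  assume b: "\<not> b \<le> 0"
  define t where "t = b / (\<bar>c\<bar> + 1)"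
  have t: "t > 0" using b by (simp add: t_def)
  have "t\<^sup>2 * (- c) \<le> t\<^sup>2 * \<bar>c\<bar>" by (intro mult_left_mono) auto
  then have "t * (2 * b) \<le> t * (t * \<bar>c\<bar>)" using assms[OF t] by (simp add: power2_eq_square mult_ac)
  then have "2 * b \<le> t * \<bar>c\<bar>" using t by simp
  also have "t * \<bar>c\<bar> < b" using b by (simp add: t_def field_simps)
  finally show False using b by simp
qed

lemma rayleigh_max_first_order:
  assumes herm: "hermitian_on S X"
    and v: "v \<in> unit_orth_compl S E"
    and vmax: "\<And>u. u \<in> unit_orth_compl S E \<Longrightarrow>
                 Re (cinner S u (mapply S X u)) \<le> Re (cinner S v (mapply S X v))"
    and wS: "\<forall>a. a \<notin> S \<longrightarrow> w a = 0" and wv: "cinner S v w = 0" and wE: "\<forall>e\<in>E. cinner S e w = 0"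
  shows "Re (cinner S v (mapply S X w)) \<le> 0"
proof (rule linear_coeff_nonpos)
  fix t :: real assume t: "t > 0"
  define \<mu> where "\<mu> = Re (cinner S v (mapply S X v))"
  define n where "n = Re (cinner S w w)"
  define q where "q = Re (cinner S w (mapply S X w))"
  define b where "b = Re (cinner S v (mapply S X w))"
  define y where "y = (\<lambda>a. v a + of_real t * w a)"
  have vv: "cinner S v v = 1" and vS: "\<forall>a. a \<notin> S \<longrightarrow> v a = 0" and vE: "\<forall>e\<in>E. cinner S e v = 0"
    using v unfolding unit_orth_compl_def by auto
  have wv': "cinner S w v = 0" using wv cnj_cinner[of S w v] by simp
  have yy: "Re (cinner S y y) = 1 + t\<^sup>2 * n"
    unfolding y_def n_def
    by (simp add: cinner_add_left cinner_add_right cinner_scale_left cinner_scale_right vv wv wv'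
        power2_eq_square)
  have "cinner S w (mapply S X v) = cnj (cinner S v (mapply S X w))"
    using hermitian_cinner_mapply[OF herm, of w v] cnj_cinner[of S v "mapply S X w"] by simp
  then have "Re (cinner S w (mapply S X v)) = b" unfolding b_def by simp
  then have yXy: "Re (cinner S y (mapply S X y)) = \<mu> + 2 * t * b + t\<^sup>2 * q"
    unfolding y_def \<mu>_def b_def q_def
    by (simp add: mapply_add mapply_scale cinner_add_left cinner_add_right cinner_scale_left
        cinner_scale_right power2_eq_square)
  have D: "1 + t\<^sup>2 * n > 0"
    using cinner_self_nonneg[of S w] unfolding n_def by (simp add: add_pos_nonneg)
  define r where "r = 1 / sqrt (Re (cinner S y y))"
  have "(\<lambda>a. of_real r * y a) \<in> unit_orth_compl S E"
    unfolding r_def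
    by (rule normalized_in_unit_orth_compl)
       (use vS wS vE wE D yy in \<open>auto simp: y_def cinner_add_right cinner_scale_right\<close>)
  from vmax[OF this] have "r * r * (\<mu> + 2 * t * b + t\<^sup>2 * q) \<le> \<mu>"
    unfolding \<mu>_def[symmetric] mapply_scale cinner_scale_left cinner_scale_right yXy[symmetric]
    by (simp add: mult.assoc)
  moreover have "r * r = 1 / (1 + t\<^sup>2 * n)"
    unfolding r_def yy using D by (simp add: real_sqrt_mult[symmetric] field_simps)
  ultimately have "\<mu> + 2 * t * b + t\<^sup>2 * q \<le> \<mu> * (1 + t\<^sup>2 * n)"
    using D by (simp add: field_simps)
  then show "2 * t * b + t\<^sup>2 * (q - \<mu> * n) \<le> 0" by (simp add: algebra_simps)
qed

lemma rayleigh_max_eigenvector: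
  fixes S :: "'i::finite set"
  assumes herm: "hermitian_on S X"
    and E_eig: "\<And>e. e \<in> E \<Longrightarrow> \<exists>l. \<forall>a\<in>S. mapply S X e a = l * e a"
    and v: "v \<in> unit_orth_compl S E"
    and vmax: "\<And>u. u \<in> unit_orth_compl S E \<Longrightarrow>
                 Re (cinner S u (mapply S X u)) \<le> Re (cinner S v (mapply S X v))"
  shows "\<forall>a\<in>S. mapply S X v a = of_real (Re (cinner S v (mapply S X v))) * v a"
proof -
  define \<mu> where "\<mu> = Re (cinner S v (mapply S X v))"
  define w where "w = (\<lambda>a. if a \<in> S then mapply S X v a - of_real \<mu> * v a else 0)"
  have vv: "cinner S v v = 1" and vE: "\<And>e. e \<in> E \<Longrightarrow> cinner S e v = 0"
    using v unfolding unit_orth_compl_def by auto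
  have w_eq: "cinner S u w = cinner S u (mapply S X v) - of_real \<mu> * cinner S u v" for u
    by (subst cinner_cong[OF refl, of _ _ "\<lambda>a. mapply S X v a - of_real \<mu> * v a"])
       (simp_all add: w_def cinner_diff_right cinner_scale_right)
  have vXv: "cinner S v (mapply S X v) = of_real \<mu>"
    using hermitian_quadratic_real[OF herm, of v] unfolding \<mu>_def by (simp add: complex_eq_iff)
  have wv: "cinner S v w = 0" by (simp add: w_eq vv vXv)
  have wE: "\<forall>e\<in>E. cinner S e w = 0"
  proof
    fix e assume e: "e \<in> E"
    obtain l where l: "\<forall>a\<in>S. mapply S X e a = l * e a" using E_eig e by blast
    have "cinner S e (mapply S X v) = cinner S (\<lambda>a. l * e a) v"
      unfolding hermitian_cinner_mapply[OF herm] by (rule cinner_cong) (use l in auto)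
    then show "cinner S e w = 0" by (simp add: w_eq cinner_scale_left vE[OF e])
  qed
  have "cinner S w w = cinner S (\<lambda>a. mapply S X v a - of_real \<mu> * v a) w"
    by (rule cinner_cong) (auto simp: w_def)
  also have "\<dots> = cinner S (mapply S X v) w" by (simp add: cinner_diff_left cinner_scale_left wv)
  also have "\<dots> = cinner S v (mapply S X w)" by (rule hermitian_cinner_mapply[OF herm, symmetric])
  finally have "Re (cinner S w w) \<le> 0"
    using rayleigh_max_first_order[OF herm v vmax _ wv wE] by (simp add: w_def)
  then have "Re (cinner S w w) = 0" using cinner_self_nonneg[of S w] by simp
  then have "w a = 0" if "a \<in> S" for a using cinner_self_eq_0D[OF _ _ that] by simp
  then show ?thesis unfolding w_def \<mu>_def by simp
qed

definition orthonormal_eigensystem ::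
    "'i set \<Rightarrow> ('i \<Rightarrow> 'i \<Rightarrow> complex) \<Rightarrow> ('i \<Rightarrow> complex) set \<Rightarrow> (('i \<Rightarrow> complex) \<Rightarrow> real) \<Rightarrow> bool" where
  "orthonormal_eigensystem S X E ev \<longleftrightarrow>
     orthonormal_on S E \<and> (\<forall>e\<in>E. \<forall>a\<in>S. mapply S X e a = of_real (ev e) * e a)"

lemma orthonormal_eigensystem_extend:
  fixes S :: "'i::finite set"
  assumes herm: "hermitian_on S X" and es: "orthonormal_eigensystem S X E ev"
    and ne: "unit_orth_compl S E \<noteq> {}"
  shows "\<exists>E' ev'. orthonormal_eigensystem S X E' ev' \<and> card E' = Suc (card E)"
proof -
  obtain v where v: "v \<in> unit_orth_compl S E"
    and vmax: "\<forall>u\<in>unit_orth_compl S E. Re (cinner S u (mapply S X u)) \<le> Re (cinner S v (mapply S X v))"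
    using rayleigh_max_exists[OF ne] by blast
  have fin: "finite E" and ES: "\<forall>e\<in>E. \<forall>a. a \<notin> S \<longrightarrow> e a = 0"
    and orth: "\<forall>e\<in>E. \<forall>f\<in>E. cinner S e f = (if e = f then 1 else 0)"
    and eig: "\<forall>e\<in>E. \<forall>a\<in>S. mapply S X e a = of_real (ev e) * e a"
    using es unfolding orthonormal_eigensystem_def orthonormal_on_def by auto
  have vS: "\<forall>a. a \<notin> S \<longrightarrow> v a = 0" and vv: "cinner S v v = 1" and vE: "\<forall>e\<in>E. cinner S e v = 0"
    using v unfolding unit_orth_compl_def by auto
  have Ev: "\<forall>e\<in>E. cinner S v e = 0" using vE cnj_cinner by (metis complex_cnj_zero)
  have "v \<notin> E" using vE vv by force
  define \<mu> where "\<mu> = Re (cinner S v (mapply S X v))"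
  have "\<forall>a\<in>S. mapply S X v a = of_real \<mu> * v a"
    unfolding \<mu>_def using eig vmax by (intro rayleigh_max_eigenvector[OF herm _ v]) auto
  then have "orthonormal_eigensystem S X (insert v E) (ev(v := \<mu>))"
    unfolding orthonormal_eigensystem_def orthonormal_on_def
    using fin ES orth eig vS vv vE Ev \<open>v \<notin> E\<close> by auto
  moreover have "card (insert v E) = Suc (card E)" using fin \<open>v \<notin> E\<close> by simp
  ultimately show ?thesis by blast
qed

lemma orthonormal_complete:
  assumes on: "orthonormal_on S E" and S: "finite S" and full: "unit_orth_compl S E = {}"
    and a: "a \<in> S" and b: "b \<in> S"
  shows "(\<Sum>e\<in>E. e a * cnj (e b)) = (if a = b then 1 else 0)"
proof -
  have fin: "finite E" and orth: "\<And>e f. e \<in> E \<Longrightarrow> f \<in> E \<Longrightarrow> cinner S e f = (if e = f then 1 else 0)"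
    using on unfolding orthonormal_on_def by auto
  define \<delta> where "\<delta> = (\<lambda>c. if c = b then 1 else (0::complex))"
  have e\<delta>: "cinner S e \<delta> = cnj (e b)" for e
    unfolding cinner_def \<delta>_def using b S by (simp add: if_distrib cong: if_cong)
  \<comment> \<open>the residual of \<open>\<delta>\<close> after projecting onto \<open>E\<close> is orthogonal to \<open>E\<close>, hence zero\<close>
  define v where "v = (\<lambda>c. if c \<in> S then \<delta> c - (\<Sum>e\<in>E. cinner S e \<delta> * e c) else 0)"
  have vE: "\<forall>f\<in>E. cinner S f v = 0"
  proof
    fix f assume f: "f \<in> E"
    have "cinner S f v = cinner S f \<delta> - (\<Sum>e\<in>E. cinner S e \<delta> * cinner S f e)"
      by (subst cinner_cong[OF refl, of _ _ "\<lambda>c. \<delta> c - (\<Sum>e\<in>E. cinner S e \<delta> * e c)"])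
         (simp_all add: v_def cinner_diff_right cinner_sum_right)
    also have "(\<Sum>e\<in>E. cinner S e \<delta> * cinner S f e) = cinner S f \<delta>"
      using f fin by (simp add: orth if_distrib cong: if_cong)
    finally show "cinner S f v = 0" by simp
  qed
  have "Re (cinner S v v) = 0"
  proof (rule ccontr)
    assume "Re (cinner S v v) \<noteq> 0"
    then have "Re (cinner S v v) > 0" using cinner_self_nonneg[of S v] by simp
    from normalized_in_unit_orth_compl[OF _ vE this] show False using full by (simp add: v_def)
  qed
  then have "v a = 0" using cinner_self_eq_0D[OF S _ a] by simp
  then show ?thesis using a unfolding v_def e\<delta> by (simp add: \<delta>_def mult.commute)
qed

lemma eigen_expansion:
  assumes compl: "\<And>c. c \<in> S \<Longrightarrow> (\<Sum>e\<in>E. e c * cnj (e b)) = (if c = b then 1 else 0)"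
    and eig: "\<And>e. e \<in> E \<Longrightarrow> mapply S X e a = l e * e a"
    and S: "finite S" and b: "b \<in> S"
  shows "X a b = (\<Sum>e\<in>E. l e * e a * cnj (e b))"
proof -
  have "X a b = (\<Sum>c\<in>S. X a c * (if c = b then 1 else 0))" using S b by (simp add: if_distrib cong: if_cong)
  also have "\<dots> = (\<Sum>c\<in>S. X a c * (\<Sum>e\<in>E. e c * cnj (e b)))" by (simp add: compl)
  also have "\<dots> = (\<Sum>e\<in>E. mapply S X e a * cnj (e b))"
    unfolding mapply_def by (simp add: sum_distrib_left sum_distrib_right sum.swap[of _ S] mult_ac)
  finally show ?thesis by (simp add: eig)
qed

definition orthonormal_basis :: "'i set \<Rightarrow> ('i \<Rightarrow> complex) set \<Rightarrow> bool" where
  "orthonormal_basis S E \<longleftrightarrow> orthonormal_on S E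
     \<and> (\<forall>a\<in>S. \<forall>b\<in>S. (\<Sum>e\<in>E. e a * cnj (e b)) = (if a = b then 1 else 0))"

definition spectral_decomp ::
    "'i set \<Rightarrow> ('i \<Rightarrow> 'i \<Rightarrow> complex) \<Rightarrow> ('i \<Rightarrow> complex) set \<Rightarrow> (('i \<Rightarrow> complex) \<Rightarrow> real) \<Rightarrow> bool" where
  "spectral_decomp S X E ev \<longleftrightarrow> orthonormal_basis S E
     \<and> (\<forall>a\<in>S. \<forall>b\<in>S. X a b = (\<Sum>e\<in>E. of_real (ev e) * e a * cnj (e b)))"

theorem hermitian_spectral_decomp:
  fixes S :: "'i::finite set"
  assumes herm: "hermitian_on S X"
  shows "\<exists>E ev. spectral_decomp S X E ev"
proof -
  define C where "C = {card E | E ev. orthonormal_eigensystem S X E ev}"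
  have "C \<subseteq> {..DIM(complex^'i)}"
    unfolding C_def orthonormal_eigensystem_def orthonormal_on_def
    using orthonormal_card_le by fastforce
  then have finC: "finite C" using finite_subset by blast
  have "0 \<in> C" unfolding C_def orthonormal_eigensystem_def orthonormal_on_def by force
  define m where "m = Max C"
  have "m \<in> C" unfolding m_def using finC \<open>0 \<in> C\<close> Max_in by blast
  then obtain E ev where es: "orthonormal_eigensystem S X E ev" and card: "card E = m"
    unfolding C_def by blast
  \<comment> \<open>a system of maximal size cannot be extended, so it spans\<close>
  have full: "unit_orth_compl S E = {}"
  proof (rule ccontr)
    assume "unit_orth_compl S E \<noteq> {}"
    then obtain E' ev' where "orthonormal_eigensystem S X E' ev'" "card E' = Suc m"
      using orthonormal_eigensystem_extend[OF herm es] card by auto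
    then have "Suc m \<in> C" unfolding C_def by force
    from Max_ge[OF finC this] show False unfolding m_def by simp
  qed
  have on: "orthonormal_on S E" and eig: "\<forall>e\<in>E. \<forall>a\<in>S. mapply S X e a = of_real (ev e) * e a"
    using es unfolding orthonormal_eigensystem_def by auto
  have compl: "\<forall>a\<in>S. \<forall>b\<in>S. (\<Sum>e\<in>E. e a * cnj (e b)) = (if a = b then 1 else 0)"
    using orthonormal_complete[OF on _ full] by simp
  have "X a b = (\<Sum>e\<in>E. of_real (ev e) * e a * cnj (e b))" if "a \<in> S" "b \<in> S" for a b
    by (rule eigen_expansion[of S]) (use compl eig that in auto)
  with on compl show ?thesis unfolding spectral_decomp_def orthonormal_basis_def by blast
qed

section \<open>Functions of Hermitian matrices and the trace norm\<close>

lemma orthonormal_basisD: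
  assumes "orthonormal_basis S E"
  shows "finite E"
    and "\<And>e f. e \<in> E \<Longrightarrow> f \<in> E \<Longrightarrow> cinner S e f = (if e = f then 1 else 0)"
    and "\<And>a b. a \<in> S \<Longrightarrow> b \<in> S \<Longrightarrow> (\<Sum>e\<in>E. e a * cnj (e b)) = (if a = b then 1 else 0)"
  using assms unfolding orthonormal_basis_def orthonormal_on_def by auto

lemma expansion_mult:
  assumes E: "orthonormal_basis S E"
  shows "(\<Sum>c\<in>S. (\<Sum>e\<in>E. m e * e a * cnj (e c)) * (\<Sum>f\<in>E. n f * f c * cnj (f b)))
       = (\<Sum>e\<in>E. m e * n e * e a * cnj (e b))"
proof -
  have "(\<Sum>c\<in>S. (\<Sum>e\<in>E. m e * e a * cnj (e c)) * (\<Sum>f\<in>E. n f * f c * cnj (f b)))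
      = (\<Sum>e\<in>E. \<Sum>f\<in>E. m e * n f * e a * cnj (f b) * cinner S e f)"
    unfolding cinner_def by (simp add: sum_distrib_left sum_distrib_right sum.swap[of _ S] mult_ac)
  also have "\<dots> = (\<Sum>e\<in>E. m e * n e * e a * cnj (e b))"
    using orthonormal_basisD(1)[OF E]
    by (simp add: orthonormal_basisD(2)[OF E] if_distrib cong: if_cong)
  finally show ?thesis .
qed

lemma mapply_expansion:
  assumes "a \<in> S" and "\<forall>a\<in>S. \<forall>b\<in>S. M a b = (\<Sum>e\<in>E. m e * e a * cnj (e b))"
  shows "mapply S M v a = (\<Sum>e\<in>E. m e * e a * cinner S e v)"
proof -
  have "mapply S M v a = (\<Sum>b\<in>S. (\<Sum>e\<in>E. m e * e a * cnj (e b)) * v b)"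
    unfolding mapply_def using assms by simp
  also have "\<dots> = (\<Sum>e\<in>E. m e * e a * cinner S e v)"
    unfolding cinner_def by (simp add: sum_distrib_left sum_distrib_right sum.swap[of _ S] mult_ac)
  finally show ?thesis .
qed

lemma mapply_expansion_basis:
  assumes E: "orthonormal_basis S E" and "a \<in> S" and g: "g \<in> E"
    and "\<forall>a\<in>S. \<forall>b\<in>S. M a b = (\<Sum>e\<in>E. m e * e a * cnj (e b))"
  shows "mapply S M g a = m g * g a"
  using mapply_expansion[OF assms(2,4), of g] orthonormal_basisD(1)[OF E] g
  by (simp add: orthonormal_basisD(2)[OF E] if_distrib cong: if_cong)

lemma cinner_mapply_expansion:
  assumes "\<forall>a\<in>S. \<forall>b\<in>S. M a b = (\<Sum>e\<in>E. of_real (m e) * e a * cnj (e b))"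
  shows "cinner S v (mapply S M v) = of_real (\<Sum>e\<in>E. m e * (cmod (cinner S e v))\<^sup>2)"
proof -
  have "cinner S v (mapply S M v) = cinner S v (\<lambda>a. \<Sum>e\<in>E. (of_real (m e) * cinner S e v) * e a)"
    using mapply_expansion[OF _ assms] by (intro cinner_cong) (auto simp: mult_ac)
  also have "\<dots> = (\<Sum>e\<in>E. (of_real (m e) * cinner S e v) * cinner S v e)"
    by (rule cinner_sum_right)
  also have "\<dots> = (\<Sum>e\<in>E. of_real (m e * (cmod (cinner S e v))\<^sup>2))"
    by (simp add: cmod_cinner_square mult.assoc)
  finally show ?thesis by simp
qed

lemma psd_expansion:
  assumes E: "orthonormal_basis S E" and y: "\<And>e. e \<in> E \<Longrightarrow> y e \<ge> 0"
    and R: "\<forall>a\<in>S. \<forall>b\<in>S. R a b = (\<Sum>e\<in>E. of_real (y e) * e a * cnj (e b))"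
  shows "psd_on S R"
  unfolding psd_on_def
proof (intro conjI allI)
  show "hermitian_on S R" using R unfolding hermitian_on_def by (simp add: mult_ac)
  fix v :: "'a \<Rightarrow> complex"
  have "(\<Sum>a\<in>S. \<Sum>b\<in>S. cnj (v a) * R a b * v b) = cinner S v (mapply S R v)"
    unfolding cinner_def mapply_def by (simp add: sum_distrib_left mult_ac)
  then show "0 \<le> Re (\<Sum>a\<in>S. \<Sum>b\<in>S. cnj (v a) * R a b * v b)"
    by (simp add: cinner_mapply_expansion[OF R] y sum_nonneg)
qed

lemma psd_root_on_eigenvector:
  fixes S :: "'i::finite set"
  assumes E: "orthonormal_basis S E" and r: "\<And>e. e \<in> E \<Longrightarrow> r e \<ge> 0"
    and Y: "\<forall>a\<in>S. \<forall>b\<in>S. Y a b = (\<Sum>e\<in>E. of_real ((r e)\<^sup>2) * e a * cnj (e b))"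
    and psd: "psd_on S R" and RR: "\<And>a b. a \<in> S \<Longrightarrow> b \<in> S \<Longrightarrow> mmult S R R a b = Y a b"
    and g: "g \<in> E" and a: "a \<in> S"
  shows "mapply S R g a = of_real (r g) * g a"
proof -
  define s where "s = r g"
  have s0: "s \<ge> 0" and ss: "s * s = (r g)\<^sup>2" unfolding s_def using r g by (simp_all add: power2_eq_square)
  have herm: "hermitian_on S R" using psd unfolding psd_on_def by blast
  define Rg where "Rg = mapply S R g"
  have RRg: "mapply S R Rg c = of_real (s * s) * g c" if c: "c \<in> S" for c
  proof -
    have "mapply S R Rg c = mapply S (mmult S R R) g c" unfolding Rg_def mapply_mmult ..
    also have "\<dots> = mapply S Y g c" unfolding mapply_def using RR c by simp
    finally show ?thesis using mapply_expansion_basis[OF E c g Y] ss by simp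
  qed
  \<comment> \<open>\<open>w\<close> is an eigenvector of \<open>R\<close> for \<open>-s\<close>; positivity of \<open>R\<close> forces it to vanish\<close>
  define w where "w = (\<lambda>c. Rg c - of_real s * g c)"
  have Rw: "mapply S R w c = - of_real s * w c" if c: "c \<in> S" for c
  proof -
    have "mapply S R w c = mapply S R Rg c - of_real s * Rg c"
      unfolding w_def Rg_def by (simp add: mapply_def right_diff_distrib sum_subtractf sum_distrib_left mult_ac)
    then show ?thesis using RRg[OF c] unfolding w_def by (simp add: algebra_simps)
  qed
  have "cinner S w (mapply S R w) = cinner S w (\<lambda>c. - of_real s * w c)"
    by (rule cinner_cong) (simp_all add: Rw)
  also have "\<dots> = - of_real s * cinner S w w" by (rule cinner_scale_right)
  finally have sw: "s * Re (cinner S w w) \<le> 0" using psd_quadratic_nonneg[OF psd, of w] by simp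
  show ?thesis
  proof (cases "s = 0")
    case True
    have "cinner S Rg Rg = cinner S g (mapply S R Rg)"
      unfolding Rg_def by (rule hermitian_cinner_mapply[OF herm, symmetric])
    also have "\<dots> = 0" using RRg True by (simp add: cinner_def)
    finally have "Rg a = 0" using cinner_self_eq_0D[OF _ _ a, of Rg] by simp
    then show ?thesis using True unfolding Rg_def s_def by simp
  next
    case False
    then have "Re (cinner S w w) = 0"
      using s0 sw cinner_self_nonneg[of S w] by (simp add: mult_le_0_iff)
    then have "w a = 0" using cinner_self_eq_0D[OF _ _ a, of w] by simp
    then show ?thesis unfolding w_def Rg_def s_def by simp
  qed
qed

lemma psd_sqrt_expansion:
  fixes S :: "'i::finite set"
  assumes E: "orthonormal_basis S E" and r: "\<And>e. e \<in> E \<Longrightarrow> r e \<ge> 0"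
    and Y: "\<forall>a\<in>S. \<forall>b\<in>S. Y a b = (\<Sum>e\<in>E. of_real ((r e)\<^sup>2) * e a * cnj (e b))"
  shows "psd_sqrt S Y
           = (\<lambda>a b. if a \<in> S \<and> b \<in> S then (\<Sum>e\<in>E. of_real (r e) * e a * cnj (e b)) else 0)"
    (is "_ = ?R")
  unfolding psd_sqrt_def
proof (rule the_equality)
  have R: "\<forall>a\<in>S. \<forall>b\<in>S. ?R a b = (\<Sum>e\<in>E. of_real (r e) * e a * cnj (e b))" by simp
  have "mmult S ?R ?R a b = Y a b" if "a \<in> S" "b \<in> S" for a b
    using that Y expansion_mult[OF E, of "\<lambda>e. of_real (r e)" a "\<lambda>e. of_real (r e)" b]
    by (simp add: mmult_def power2_eq_square)
  then show "psd_on S ?R \<and> (\<forall>a b. a \<notin> S \<or> b \<notin> S \<longrightarrow> ?R a b = 0) \<and> (\<forall>a\<in>S. \<forall>b\<in>S. mmult S ?R ?R a b = Y a b)"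
    using psd_expansion[OF E _ R] r by simp
next
  fix R assume R: "psd_on S R \<and> (\<forall>a b. a \<notin> S \<or> b \<notin> S \<longrightarrow> R a b = 0) \<and> (\<forall>a\<in>S. \<forall>b\<in>S. mmult S R R a b = Y a b)"
  show "R = ?R"
  proof (intro ext)
    fix a b
    show "R a b = ?R a b"
    proof (cases "a \<in> S \<and> b \<in> S")
      case True
      have "R a b = (\<Sum>e\<in>E. of_real (r e) * e a * cnj (e b))"
        by (rule eigen_expansion[where S = S and X = R and l = "\<lambda>e. of_real (r e)"])
           (use True R orthonormal_basisD(3)[OF E] psd_root_on_eigenvector[OF E r Y] in auto)
      then show ?thesis using True by simp
    qed (use R in auto)
  qed
qed

lemma trace_norm_eq_sum_abs:
  fixes S :: "'i::finite set"
  assumes herm: "hermitian_on S X" and sp: "spectral_decomp S X E ev"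
  shows "trace_norm S X = (\<Sum>e\<in>E. \<bar>ev e\<bar>)"
proof -
  have E: "orthonormal_basis S E" and X: "\<forall>a\<in>S. \<forall>b\<in>S. X a b = (\<Sum>e\<in>E. of_real (ev e) * e a * cnj (e b))"
    using sp unfolding spectral_decomp_def by auto
  have "\<forall>a\<in>S. \<forall>b\<in>S. mmult S (adj X) X a b = (\<Sum>e\<in>E. of_real (\<bar>ev e\<bar>\<^sup>2) * e a * cnj (e b))"
  proof (intro ballI)
    fix a b assume a: "a \<in> S" and b: "b \<in> S"
    have "mmult S (adj X) X a b = (\<Sum>c\<in>S. X a c * X c b)"
      unfolding mmult_def adj_def
    proof (intro sum.cong refl)
      fix c assume "c \<in> S"
      then have "X a c = cnj (X c a)" using herm a unfolding hermitian_on_def by blast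
      then show "cnj (X c a) * X c b = X a c * X c b" by simp
    qed
    also have "\<dots> = (\<Sum>e\<in>E. of_real (ev e) * of_real (ev e) * e a * cnj (e b))"
      using X a b expansion_mult[OF E, of "\<lambda>e. of_real (ev e)" a "\<lambda>e. of_real (ev e)" b] by simp
    finally show "mmult S (adj X) X a b = (\<Sum>e\<in>E. of_real (\<bar>ev e\<bar>\<^sup>2) * e a * cnj (e b))"
      by (simp add: power2_eq_square)
  qed
  from psd_sqrt_expansion[OF E _ this] have "psd_sqrt S (mmult S (adj X) X)
    = (\<lambda>a b. if a \<in> S \<and> b \<in> S then (\<Sum>e\<in>E. of_real \<bar>ev e\<bar> * e a * cnj (e b)) else 0)"
    by simp
  then have "mtrace S (psd_sqrt S (mmult S (adj X) X)) = (\<Sum>e\<in>E. of_real \<bar>ev e\<bar> * cinner S e e)"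
    unfolding mtrace_def cinner_def by (simp add: sum_distrib_left sum.swap[of _ S E] mult_ac)
  then show ?thesis unfolding trace_norm_def using orthonormal_basisD(2)[OF E] by simp
qed

lemma mtrace_mult_spectral:
  assumes sp: "spectral_decomp S X E ev"
  shows "mtrace S (mmult S X M) = (\<Sum>e\<in>E. of_real (ev e) * cinner S e (mapply S M e))"
proof -
  have X: "\<forall>a\<in>S. \<forall>b\<in>S. X a b = (\<Sum>e\<in>E. of_real (ev e) * e a * cnj (e b))"
    using sp unfolding spectral_decomp_def by auto
  have "mtrace S (mmult S X M) = (\<Sum>a\<in>S. \<Sum>b\<in>S. \<Sum>e\<in>E. of_real (ev e) * (e a * cnj (e b) * M b a))"
    unfolding mtrace_def mmult_def
    by (intro sum.cong refl) (use X in \<open>auto simp: sum_distrib_right sum_distrib_left mult_ac\<close>)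
  also have "\<dots> = (\<Sum>e\<in>E. of_real (ev e) * (\<Sum>b\<in>S. \<Sum>a\<in>S. cnj (e b) * (M b a * e a)))"
    by (simp add: sum_distrib_left sum.swap[of _ S E] mult_ac) (subst sum.swap, simp)
  also have "\<dots> = (\<Sum>e\<in>E. of_real (ev e) * cinner S e (mapply S M e))"
    unfolding cinner_def mapply_def by (simp add: sum_distrib_left)
  finally show ?thesis .
qed

lemma mtrace_mult_le_trace_norm:
  fixes S :: "'i::finite set"
  assumes herm: "hermitian_on S X"
    and K: "\<And>e. Re (cinner S e e) = 1 \<Longrightarrow> cmod (cinner S e (mapply S M e)) \<le> K"
  shows "cmod (mtrace S (mmult S X M)) \<le> K * trace_norm S X"
proof -
  obtain E ev where sp: "spectral_decomp S X E ev" using hermitian_spectral_decomp[OF herm] by blast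
  have E: "orthonormal_basis S E" using sp unfolding spectral_decomp_def by blast
  have "cmod (mtrace S (mmult S X M)) \<le> (\<Sum>e\<in>E. cmod (of_real (ev e) * cinner S e (mapply S M e)))"
    unfolding mtrace_mult_spectral[OF sp] by (rule norm_sum)
  also have "\<dots> \<le> (\<Sum>e\<in>E. \<bar>ev e\<bar> * K)"
    using orthonormal_basisD(2)[OF E] by (intro sum_mono) (simp add: norm_mult K mult_left_mono)
  finally show ?thesis by (simp add: trace_norm_eq_sum_abs[OF herm sp] sum_distrib_left mult_ac)
qed

section \<open>Trace distance to a pure state\<close>

lemma quadratic_form_basis_vector:
  assumes E: "orthonormal_basis S E" and u: "u \<in> E"
  shows "(\<Sum>e\<in>E. d e * (cmod (cinner S e u))\<^sup>2) = d u"
proof -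
  have "(\<Sum>e\<in>E. d e * (cmod (cinner S e u))\<^sup>2) = (\<Sum>e\<in>E. if e = u then d e else 0)"
    by (intro sum.cong refl) (simp add: orthonormal_basisD(2)[OF E _ u])
  then show ?thesis using orthonormal_basisD(1)[OF E] u by simp
qed

lemma real_sq_le_of_test_vector_ineq:
  fixes a x s :: real
  assumes a: "a > 0" and xa: "a \<le> x" and s0: "s \<ge> 0" and s1: "s \<le> a * (1 - x)"
    and g: "0 \<le> x * (s + (1 - x)\<^sup>2) * (x * s - a * (s + (1 - x)\<^sup>2))"
  shows "a\<^sup>2 \<le> a * x - s"
proof (cases "s + (1 - x)\<^sup>2 = 0")
  case True
  then have "x = 1" "s = 0" using s0 by (simp_all add: add_nonneg_eq_0_iff)
  then show ?thesis using xa a by (simp add: power2_eq_square)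
next
  case False
  then have "x * (s + (1 - x)\<^sup>2) > 0" using s0 a xa by (simp add: add_nonneg_pos order_less_le)
  then have h: "x * s - a * (s + (1 - x)\<^sup>2) \<ge> 0" using g zero_le_mult_iff by (metis not_less)
  define p where "p = x - a"
  have p0: "p \<ge> 0" using xa p_def by simp
  have ps: "p * s \<ge> a * (1 - x)\<^sup>2" using h unfolding p_def by (simp add: algebra_simps)
  show ?thesis
  proof (rule ccontr)
    assume "\<not> ?thesis"
    then have sp: "s > a * p" unfolding p_def by (simp add: algebra_simps power2_eq_square)
    moreover have "a * p \<ge> 0" using a p0 by simp
    ultimately have "s * s > (a * p) * s" by (simp add: mult_strict_right_mono)
    moreover have "(a * p) * s \<ge> a * (a * (1 - x)\<^sup>2)" using ps a by (simp add: mult.assoc mult_left_mono)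
    moreover have "(a * (1 - x))\<^sup>2 \<ge> s\<^sup>2" using s0 s1 by (simp add: power_mono)
    ultimately show False by (simp add: power2_eq_square mult_ac)
  qed
qed

text \<open>
  Below, \<open>d\<close> lists the eigenvalues of \<open>D = \<rho> - |\<psi>\<rangle>\<langle>\<psi>|\<close> in its eigenbasis \<open>E\<close>: \<open>D\<close> is traceless
  and \<open>D + |\<psi>\<rangle>\<langle>\<psi>|\<close> is positive. So \<open>D\<close> has at most one negative eigenvalue \<open>-a\<close>,
  \<open>\<parallel>D\<parallel>\<^sub>1 = 2a\<close>, and testing positivity on suitable vectors gives \<open>a\<^sup>2 \<le> 1 - \<langle>\<psi>|\<rho>|\<psi>\<rangle>\<close>.
\<close>

context
  fixes E :: "('i::finite \<Rightarrow> complex) set" and d :: "('i \<Rightarrow> complex) \<Rightarrow> real" and \<psi> :: "'i \<Rightarrow> complex"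
  assumes onb: "orthonormal_basis UNIV E"
    and unit: "cinner UNIV \<psi> \<psi> = 1"
    and trace_zero: "(\<Sum>e\<in>E. d e) = 0"
    and shift_psd: "\<And>v. 0 \<le> (\<Sum>e\<in>E. d e * (cmod (cinner UNIV e v))\<^sup>2) + (cmod (cinner UNIV \<psi> v))\<^sup>2"
begin

private lemma finite_basis: "finite E"
  using orthonormal_basisD(1)[OF onb] .

private lemma basis_orth: "e \<in> E \<Longrightarrow> f \<in> E \<Longrightarrow> cinner UNIV e f = (if e = f then 1 else 0)"
  using orthonormal_basisD(2)[OF onb] .

lemma parseval_unit: "(\<Sum>e\<in>E. (cmod (cinner UNIV e \<psi>))\<^sup>2) = 1"
proof -
  have "(\<Sum>e\<in>E. cinner UNIV e \<psi> * e a) = \<psi> a" for a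
  proof -
    have "(\<Sum>e\<in>E. cinner UNIV e \<psi> * e a) = (\<Sum>b\<in>UNIV. (\<Sum>e\<in>E. e a * cnj (e b)) * \<psi> b)"
      unfolding cinner_def by (simp add: sum_distrib_left sum_distrib_right sum.swap[of _ E] mult_ac)
    also have "\<dots> = (\<Sum>b\<in>UNIV. if a = b then \<psi> b else 0)"
      by (intro sum.cong refl) (simp add: orthonormal_basisD(3)[OF onb])
    also have "\<dots> = \<psi> a" by simp
    finally show ?thesis .
  qed
  then have "cinner UNIV \<psi> \<psi> = cinner UNIV \<psi> (\<lambda>a. \<Sum>e\<in>E. cinner UNIV e \<psi> * e a)" by simp
  also have "\<dots> = of_real (\<Sum>e\<in>E. (cmod (cinner UNIV e \<psi>))\<^sup>2)"
    by (simp add: cinner_sum_right cmod_cinner_square)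
  finally show ?thesis using unit by (metis of_real_eq_1_iff)
qed

lemma at_most_one_negative:
  assumes u: "u \<in> E" "d u < 0" and f: "f \<in> E" "f \<noteq> u"
  shows "d f \<ge> 0"
proof (rule ccontr)
  assume "\<not> d f \<ge> 0"
  then have df: "d f < 0" by simp
  \<comment> \<open>the combination of \<open>u\<close> and \<open>f\<close> orthogonal to \<open>\<psi>\<close> would be a negative direction of \<open>D + |\<psi>\<rangle>\<langle>\<psi>|\<close>\<close>
  define \<alpha> where "\<alpha> = cinner UNIV \<psi> f"
  define \<beta> where "\<beta> = - cinner UNIV \<psi> u"
  show False
  proof (cases "\<alpha> = 0 \<and> \<beta> = 0")
    case True
    then show False
      using shift_psd[of u] quadratic_form_basis_vector[OF onb u(1)] u by (simp add: \<beta>_def)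
  next
    case False
    define w where "w = (\<lambda>b. \<alpha> * u b + \<beta> * f b)"
    have ew: "cinner UNIV e w = \<alpha> * (if e = u then 1 else 0) + \<beta> * (if e = f then 1 else 0)"
      if "e \<in> E" for e
      unfolding w_def using that u f by (simp add: cinner_add_right cinner_scale_right basis_orth)
    have "(\<Sum>e\<in>E. d e * (cmod (cinner UNIV e w))\<^sup>2)
        = (\<Sum>e\<in>E. (if e = u then d u * (cmod \<alpha>)\<^sup>2 else 0) + (if e = f then d f * (cmod \<beta>)\<^sup>2 else 0))"
      by (intro sum.cong refl) (use f in \<open>auto simp: ew\<close>)
    also have "\<dots> = d u * (cmod \<alpha>)\<^sup>2 + d f * (cmod \<beta>)\<^sup>2"
      using finite_basis u f by (simp add: sum.distrib)
    also have "\<dots> < 0"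
      using False u(2) df
      by (smt (verit, best) mult_neg_pos mult_nonpos_nonneg zero_less_norm_iff zero_less_power
          zero_le_power2)
    moreover have "cinner UNIV \<psi> w = 0"
      unfolding w_def cinner_add_right cinner_scale_right \<alpha>_def \<beta>_def by simp
    ultimately show False using shift_psd[of w] by simp
  qed
qed

lemma test_vector_ineq:
  assumes u: "u \<in> E"
  defines "a \<equiv> - d u" and "x \<equiv> (cmod (cinner UNIV u \<psi>))\<^sup>2"
    and "s \<equiv> (\<Sum>e\<in>E - {u}. d e * (cmod (cinner UNIV e \<psi>))\<^sup>2)"
  shows "0 \<le> x * (s + (1 - x)\<^sup>2) * (x * s - a * (s + (1 - x)\<^sup>2))"
proof -
  define c where "c = cinner UNIV u \<psi>"
  define C where "C = s + (1 - x)\<^sup>2"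
  define t where "t = - (x * (1 - x))"
  \<comment> \<open>the positivity of \<open>D + |\<psi>\<rangle>\<langle>\<psi>|\<close> tested on \<open>C c u + t (\<psi> - c u)\<close>\<close>
  define v where "v = (\<lambda>b. of_real C * (c * u b) + of_real t * (\<psi> b - c * u b))"
  have ev: "cinner UNIV e v = (if e = u then of_real C * c else of_real t * cinner UNIV e \<psi>)"
    if "e \<in> E" for e
    unfolding v_def using that u by (simp add: cinner_add_right cinner_scale_right cinner_diff_right basis_orth c_def)
  have "(\<Sum>e\<in>E. d e * (cmod (cinner UNIV e v))\<^sup>2)
      = d u * (C\<^sup>2 * x) + (\<Sum>e\<in>E - {u}. d e * (cmod (cinner UNIV e v))\<^sup>2)"
    using finite_basis u ev[OF u] unfolding x_def c_def by (simp add: sum.remove norm_mult power_mult_distrib)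
  also have "(\<Sum>e\<in>E - {u}. d e * (cmod (cinner UNIV e v))\<^sup>2) = t\<^sup>2 * s"
    unfolding s_def sum_distrib_left
    by (intro sum.cong refl) (auto simp: ev norm_mult power_mult_distrib)
  finally have q1: "(\<Sum>e\<in>E. d e * (cmod (cinner UNIV e v))\<^sup>2) = - a * C\<^sup>2 * x + t\<^sup>2 * s"
    unfolding a_def by simp
  have "cinner UNIV \<psi> v = of_real C * (c * cnj c) + of_real t * (1 - c * cnj c)"
    unfolding v_def using unit cnj_cinner[of UNIV u \<psi>]
    by (simp add: cinner_add_right cinner_scale_right cinner_diff_right c_def)
  also have "c * cnj c = of_real x" unfolding x_def c_def by (metis complex_norm_square of_real_power)
  finally have "cinner UNIV \<psi> v = of_real (C * x + t * (1 - x))" by simp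
  then have q2: "(cmod (cinner UNIV \<psi> v))\<^sup>2 = (C * x + t * (1 - x))\<^sup>2"
    by (simp only: norm_of_real power2_abs)
  have "0 \<le> - a * C\<^sup>2 * x + t\<^sup>2 * s + (C * x + t * (1 - x))\<^sup>2"
    using shift_psd[of v] q1 q2 by simp
  also have "\<dots> = x * C * (x * s - a * C)"
    unfolding t_def C_def by (simp add: power2_eq_square algebra_simps)
  finally show ?thesis unfolding C_def .
qed

lemma trace_distance_from_one_negative:
  assumes u: "u \<in> E" "d u < 0"
  shows "(\<Sum>e\<in>E. \<bar>d e\<bar>) \<le> 2 * sqrt (- (\<Sum>e\<in>E. d e * (cmod (cinner UNIV e \<psi>))\<^sup>2))"
proof -
  define a where "a = - d u"
  define c where "c = cinner UNIV u \<psi>"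
  define x where "x = (cmod c)\<^sup>2"
  define s where "s = (\<Sum>e\<in>E - {u}. d e * (cmod (cinner UNIV e \<psi>))\<^sup>2)"
  have a0: "a > 0" using u a_def by simp
  have others: "e \<in> E - {u} \<Longrightarrow> d e \<ge> 0" for e using at_most_one_negative[OF u] by blast
  have "(\<Sum>e\<in>E. \<bar>d e\<bar>) = (\<Sum>e\<in>E. d e + (if e = u then 2 * a else 0))"
    by (intro sum.cong refl) (use others a_def u in auto)
  also have "\<dots> = 2 * a" using trace_zero finite_basis u by (simp add: sum.distrib)
  finally have abs_sum: "(\<Sum>e\<in>E. \<bar>d e\<bar>) = 2 * a" .
  have split: "- (\<Sum>e\<in>E. d e * (cmod (cinner UNIV e \<psi>))\<^sup>2) = a * x - s"
    unfolding s_def x_def c_def a_def using finite_basis u by (simp add: sum.remove)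
  have "a \<le> x"
    using shift_psd[of u] quadratic_form_basis_vector[OF onb u(1)]
    unfolding x_def c_def a_def by (simp add: cmod_cinner_commute)
  moreover have "s \<ge> 0" unfolding s_def by (intro sum_nonneg) (simp add: others)
  moreover have "s \<le> a * (1 - x)"
  proof -
    have px: "(\<Sum>e\<in>E - {u}. (cmod (cinner UNIV e \<psi>))\<^sup>2) = 1 - x"
      using parseval_unit finite_basis u unfolding x_def c_def by (simp add: sum.remove)
    have "s \<le> (\<Sum>e\<in>E - {u}. d e * (1 - x))"
      unfolding s_def
    proof (intro sum_mono mult_left_mono)
      fix e assume e: "e \<in> E - {u}"
      show "(cmod (cinner UNIV e \<psi>))\<^sup>2 \<le> 1 - x"
        unfolding px[symmetric] using finite_basis e by (intro member_le_sum) auto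
      show "0 \<le> d e" using e others by auto
    qed
    also have "\<dots> = (1 - x) * (\<Sum>e\<in>E - {u}. d e)" by (simp add: sum_distrib_left mult.commute)
    also have "(\<Sum>e\<in>E - {u}. d e) = a" using trace_zero finite_basis u unfolding a_def by (simp add: sum.remove)
    finally show ?thesis by (simp add: mult.commute)
  qed
  moreover have "0 \<le> x * (s + (1 - x)\<^sup>2) * (x * s - a * (s + (1 - x)\<^sup>2))"
    using test_vector_ineq[OF u(1)] unfolding a_def c_def x_def s_def .
  ultimately have "a\<^sup>2 \<le> a * x - s" by (rule real_sq_le_of_test_vector_ineq[OF a0])
  then have "a \<le> sqrt (a * x - s)" by (rule real_le_rsqrt)
  then show ?thesis using abs_sum split by simp
qed

end

lemma mtrace_spectral:
  assumes "spectral_decomp S X E ev"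
  shows "mtrace S X = of_real (\<Sum>e\<in>E. ev e)"
proof -
  have E: "orthonormal_basis S E" and X: "\<forall>a\<in>S. \<forall>b\<in>S. X a b = (\<Sum>e\<in>E. of_real (ev e) * e a * cnj (e b))"
    using assms unfolding spectral_decomp_def by auto
  have "mtrace S X = (\<Sum>e\<in>E. of_real (ev e) * cinner S e e)"
    unfolding mtrace_def cinner_def using X by (simp add: sum_distrib_left sum.swap[of _ S E] mult_ac)
  then show ?thesis using orthonormal_basisD(2)[OF E] by simp
qed

lemma hermitian_diff_projector:
  assumes "hermitian_on UNIV \<rho>"
  shows "hermitian_on UNIV (\<lambda>a b. \<rho> a b - projector \<psi> a b)"
  unfolding hermitian_on_def projector_def
proof (intro ballI)
  fix a b
  have "\<rho> a b = cnj (\<rho> b a)" using assms unfolding hermitian_on_def by blast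
  then show "\<rho> a b - \<psi> a * cnj (\<psi> b) = cnj (\<rho> b a - \<psi> b * cnj (\<psi> a))" by simp
qed

lemma mtrace_diff_projector:
  "mtrace UNIV (\<lambda>a b. \<rho> a b - projector \<psi> a b) = mtrace UNIV \<rho> - cinner UNIV \<psi> \<psi>"
  unfolding mtrace_def projector_def cinner_def by (simp add: sum_subtractf mult.commute)

lemma cinner_mapply_diff_projector:
  "cinner UNIV v (mapply UNIV \<rho> v)
     = cinner UNIV v (mapply UNIV (\<lambda>a b. \<rho> a b - projector \<psi> a b) v) + of_real ((cmod (cinner UNIV \<psi> v))\<^sup>2)"
proof -
  have "mapply UNIV (\<lambda>a b. \<rho> a b - projector \<psi> a b) v = (\<lambda>a. mapply UNIV \<rho> v a - cinner UNIV \<psi> v * \<psi> a)"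
    unfolding projector_def mapply_def cinner_def
    by (simp add: left_diff_distrib right_diff_distrib sum_subtractf sum_distrib_left mult_ac)
  then show ?thesis by (simp add: cinner_diff_right cinner_scale_right cmod_cinner_square)
qed

theorem trace_distance_pure_state:
  fixes \<rho> :: "'i::finite \<Rightarrow> 'i \<Rightarrow> complex"
  assumes psd: "psd_on UNIV \<rho>" and tr: "mtrace UNIV \<rho> = 1" and unit: "cinner UNIV \<psi> \<psi> = 1"
  shows "trace_norm UNIV (\<lambda>a b. \<rho> a b - projector \<psi> a b)
           \<le> 2 * sqrt (1 - Re (cinner UNIV \<psi> (mapply UNIV \<rho> \<psi>)))"
proof -
  define D where "D = (\<lambda>a b. \<rho> a b - projector \<psi> a b)"
  have herm: "hermitian_on UNIV D"
    unfolding D_def using psd by (intro hermitian_diff_projector) (simp add: psd_on_def)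
  obtain E d where sp: "spectral_decomp UNIV D E d" using hermitian_spectral_decomp[OF herm] by blast
  have E: "orthonormal_basis UNIV E" and fin: "finite E"
    using sp orthonormal_basisD(1) unfolding spectral_decomp_def by auto
  have quad: "Re (cinner UNIV v (mapply UNIV \<rho> v))
      = (\<Sum>e\<in>E. d e * (cmod (cinner UNIV e v))\<^sup>2) + (cmod (cinner UNIV \<psi> v))\<^sup>2" for v
  proof -
    have "cinner UNIV v (mapply UNIV D v) = of_real (\<Sum>e\<in>E. d e * (cmod (cinner UNIV e v))\<^sup>2)"
      using sp unfolding spectral_decomp_def by (intro cinner_mapply_expansion) simp
    then show ?thesis using cinner_mapply_diff_projector[of v \<rho> \<psi>, folded D_def] by simp
  qed
  have tz: "(\<Sum>e\<in>E. d e) = 0"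
    using mtrace_spectral[OF sp] mtrace_diff_projector[of \<rho> \<psi>] tr unit unfolding D_def
    by (metis diff_self of_real_eq_0_iff)
  have pos: "0 \<le> (\<Sum>e\<in>E. d e * (cmod (cinner UNIV e v))\<^sup>2) + (cmod (cinner UNIV \<psi> v))\<^sup>2" for v
    using psd_quadratic_nonneg[OF psd, of v] quad[of v] by simp
  have fid: "1 - Re (cinner UNIV \<psi> (mapply UNIV \<rho> \<psi>)) = - (\<Sum>e\<in>E. d e * (cmod (cinner UNIV e \<psi>))\<^sup>2)"
    using quad[of \<psi>] unit by simp
  have tn: "trace_norm UNIV D = (\<Sum>e\<in>E. \<bar>d e\<bar>)" by (rule trace_norm_eq_sum_abs[OF herm sp])
  show ?thesis
  proof (cases "\<forall>e\<in>E. d e \<ge> 0")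
    case True
    then have "\<forall>e\<in>E. d e = 0" using tz sum_nonneg_eq_0_iff[OF fin] by blast
    then show ?thesis using tn fid unfolding D_def by simp
  next
    case False
    then obtain u where "u \<in> E" "d u < 0" by (auto simp: not_le)
    from trace_distance_from_one_negative[OF E unit tz pos this]
    show ?thesis using tn fid unfolding D_def by simp
  qed
qed

section \<open>Operator norm\<close>

lemma vnorm_eq_L2_set: "vnorm S v = L2_set (\<lambda>a. cmod (v a)) S"
  unfolding vnorm_def L2_set_def by simp

lemma vnorm_cinner: "vnorm S v = sqrt (Re (cinner S v v))"
  unfolding vnorm_def by (simp add: cinner_self)

lemma vnorm_nonneg: "vnorm S v \<ge> 0"
  unfolding vnorm_def by (simp add: sum_nonneg)

lemma vnorm_scale: "vnorm S (\<lambda>a. c * v a) = cmod c * vnorm S v"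
  unfolding vnorm_def by (simp add: norm_mult power_mult_distrib sum_distrib_left[symmetric] real_sqrt_mult)

lemma cinner_self_eq_1_of_vnorm: "vnorm S v = 1 \<Longrightarrow> cinner S v v = 1"
  unfolding vnorm_cinner by (metis cinner_self_eq_Re of_real_1 real_sqrt_eq_1_iff)

lemma cmod_cinner_le: "cmod (cinner S u v) \<le> vnorm S u * vnorm S v"
proof -
  have "cmod (cinner S u v) \<le> (\<Sum>a\<in>S. cmod (cnj (u a) * v a))" unfolding cinner_def by (rule norm_sum)
  also have "\<dots> = (\<Sum>a\<in>S. \<bar>cmod (u a)\<bar> * \<bar>cmod (v a)\<bar>)" by (simp add: norm_mult)
  also have "\<dots> \<le> L2_set (\<lambda>a. cmod (u a)) S * L2_set (\<lambda>a. cmod (v a)) S" by (rule L2_set_mult_ineq)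
  finally show ?thesis by (simp add: vnorm_eq_L2_set)
qed

lemma bdd_above_opnorm:
  assumes fin: "finite S"
  shows "bdd_above {vnorm S (mapply S X v) | v. vnorm S v \<le> 1}"
proof -
  have "vnorm S (mapply S X v) \<le> (\<Sum>a\<in>S. \<Sum>b\<in>S. cmod (X a b))" if v: "vnorm S v \<le> 1" for v
  proof -
    have vb: "cmod (v b) \<le> 1" if b: "b \<in> S" for b
    proof -
      have "(cmod (v b))\<^sup>2 \<le> (\<Sum>a\<in>S. (cmod (v a))\<^sup>2)" using fin b by (intro member_le_sum) auto
      also have "\<dots> \<le> 1" using v unfolding vnorm_def by (simp add: real_sqrt_le_1_iff)
      finally show ?thesis by (simp add: power_le_one_iff)
    qed
    have "cmod (mapply S X v a) \<le> (\<Sum>b\<in>S. cmod (X a b))" for a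
    proof -
      have "cmod (mapply S X v a) \<le> (\<Sum>b\<in>S. cmod (X a b * v b))"
        unfolding mapply_def by (rule norm_sum)
      also have "\<dots> = (\<Sum>b\<in>S. cmod (X a b) * cmod (v b))" by (simp add: norm_mult)
      also have "\<dots> \<le> (\<Sum>b\<in>S. cmod (X a b))"
        using vb by (intro sum_mono) (simp add: mult_left_le)
      finally show ?thesis .
    qed
    then have "(\<Sum>a\<in>S. \<bar>cmod (mapply S X v a)\<bar>) \<le> (\<Sum>a\<in>S. \<Sum>b\<in>S. cmod (X a b))"
      by (intro sum_mono) simp
    with L2_set_le_sum_abs[of "\<lambda>a. cmod (mapply S X v a)" S] show ?thesis
      unfolding vnorm_eq_L2_set by linarith
  qed
  then show ?thesis unfolding bdd_above_def by blast
qed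

lemma opnorm_nonneg:
  assumes "finite S" shows "opnorm S X \<ge> 0"
proof -
  have "vnorm S (\<lambda>_. 0::complex) \<le> 1" by (simp add: vnorm_def)
  then have "vnorm S (mapply S X (\<lambda>_. 0)) \<le> opnorm S X"
    unfolding opnorm_def by (intro cSup_upper[OF _ bdd_above_opnorm[OF assms]]) blast
  then show ?thesis by (simp add: vnorm_def mapply_def)
qed

lemma vnorm_mapply_le:
  assumes fin: "finite S"
  shows "vnorm S (mapply S X v) \<le> opnorm S X * vnorm S v"
proof (cases "vnorm S v = 0")
  case True
  then have "Re (cinner S v v) = 0" unfolding vnorm_cinner using cinner_self_nonneg[of S v] by simp
  then have "\<And>b. b \<in> S \<Longrightarrow> v b = 0" using cinner_self_eq_0D[OF fin] by blast
  then have "mapply S X v = (\<lambda>_. 0)" unfolding mapply_def by (auto intro: sum.neutral)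
  then show ?thesis using True by (simp add: vnorm_def)
next
  case False
  then have n: "vnorm S v > 0" using vnorm_nonneg[of S v] by simp
  define v' where "v' = (\<lambda>a. of_real (1 / vnorm S v) * v a)"
  have "vnorm S v' = 1" unfolding v'_def vnorm_scale using n by (simp add: norm_divide)
  then have "vnorm S (mapply S X v') \<le> opnorm S X"
    unfolding opnorm_def by (intro cSup_upper[OF _ bdd_above_opnorm[OF fin]]) auto
  moreover have "vnorm S (mapply S X v') = vnorm S (mapply S X v) / vnorm S v"
    unfolding v'_def mapply_scale vnorm_scale using n by (simp add: norm_divide)
  ultimately show ?thesis using n by (simp add: field_simps)
qed

lemma cmod_quadratic_le_opnorm:
  assumes fin: "finite S"
  shows "cmod (cinner S w (mapply S X w)) \<le> opnorm S X * Re (cinner S w w)"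
proof -
  have "cmod (cinner S w (mapply S X w)) \<le> vnorm S w * vnorm S (mapply S X w)" by (rule cmod_cinner_le)
  also have "\<dots> \<le> vnorm S w * (opnorm S X * vnorm S w)"
    by (intro mult_left_mono vnorm_mapply_le[OF fin] vnorm_nonneg)
  also have "\<dots> = opnorm S X * Re (cinner S w w)"
    unfolding vnorm_cinner using cinner_self_nonneg[of S w] by (simp add: power2_eq_square[symmetric])
  finally show ?thesis .
qed

section \<open>Local terms and partial traces\<close>

lemma configs_iff: "\<sigma> \<in> configs A \<longleftrightarrow> (\<forall>i. i \<notin> A \<longrightarrow> \<sigma> i = undefined)"
  unfolding configs_def PiE_iff extensional_def by auto

lemma restrict_in_configs: "restrict \<sigma> A \<in> configs A"
  unfolding configs_iff by simp

lemma restrict_merge: "\<sigma> \<in> configs A \<Longrightarrow> restrict (merge A \<sigma> \<omega>) A = \<sigma>"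
  unfolding configs_iff merge_def by (auto simp: restrict_def)

lemma restrict_merge_compl: "\<omega> \<in> configs (- A) \<Longrightarrow> restrict (merge A \<sigma> \<omega>) (- A) = \<omega>"
  unfolding configs_iff merge_def by (auto simp: restrict_def)

lemma merge_restrict: "(\<And>i. i \<notin> A \<Longrightarrow> \<omega> i = \<alpha> i) \<Longrightarrow> merge A (restrict \<alpha> A) \<omega> = \<alpha>"
  unfolding merge_def by (auto simp: restrict_def)

lemma merge_agree_compl: "i \<notin> A \<Longrightarrow> merge A \<sigma> \<omega> i = merge A \<tau> \<omega> i"
  unfolding merge_def by simp

lemma bij_betw_merge_pairs:
  "bij_betw (\<lambda>(\<sigma>, \<tau>, \<omega>). (merge A \<sigma> \<omega>, merge A \<tau> \<omega>)) (configs A \<times> configs A \<times> configs (- A))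
     {(\<alpha>, \<beta>). \<forall>i. i \<notin> A \<longrightarrow> \<alpha> i = \<beta> i}"
proof (rule bij_betw_byWitness[where f' = "\<lambda>(\<alpha>, \<beta>). (restrict \<alpha> A, restrict \<beta> A, restrict \<alpha> (- A))"])
  show "\<forall>x\<in>configs A \<times> configs A \<times> configs (- A).
      (\<lambda>(\<alpha>, \<beta>). (restrict \<alpha> A, restrict \<beta> A, restrict \<alpha> (- A))) ((\<lambda>(\<sigma>, \<tau>, \<omega>). (merge A \<sigma> \<omega>, merge A \<tau> \<omega>)) x) = x"
    by (auto simp: restrict_merge restrict_merge_compl)
  show "\<forall>y\<in>{(\<alpha>, \<beta>). \<forall>i. i \<notin> A \<longrightarrow> \<alpha> i = \<beta> i}.
      (\<lambda>(\<sigma>, \<tau>, \<omega>). (merge A \<sigma> \<omega>, merge A \<tau> \<omega>)) ((\<lambda>(\<alpha>, \<beta>). (restrict \<alpha> A, restrict \<beta> A, restrict \<alpha> (- A))) y) = y"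
    by (auto simp: merge_restrict)
qed (auto simp: merge_def restrict_in_configs)

lemma mtrace_mult_supported:
  fixes D M :: "('s::finite \<Rightarrow> 'q::finite) \<Rightarrow> ('s \<Rightarrow> 'q) \<Rightarrow> complex"
  assumes M: "\<And>\<sigma> \<tau>. M \<sigma> \<tau> = (if \<forall>i. i \<notin> Z \<longrightarrow> \<sigma> i = \<tau> i then m (restrict \<sigma> Z) (restrict \<tau> Z) else 0)"
  shows "mtrace UNIV (mmult UNIV D M) = mtrace (configs Z) (mmult (configs Z) (ptrace Z D) m)"
proof -
  define P :: "(('s \<Rightarrow> 'q) \<times> ('s \<Rightarrow> 'q)) set"
    where "P = {(\<alpha>, \<beta>). \<forall>i. i \<notin> Z \<longrightarrow> \<alpha> i = \<beta> i}"
  have "mtrace UNIV (mmult UNIV D M) = (\<Sum>(\<alpha>, \<beta>)\<in>UNIV. D \<alpha> \<beta> * M \<beta> \<alpha>)"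
    unfolding mtrace_def mmult_def
    by (simp add: sum.cartesian_product UNIV_Times_UNIV[symmetric] del: UNIV_Times_UNIV)
  also have "\<dots> = (\<Sum>(\<alpha>, \<beta>)\<in>P. D \<alpha> \<beta> * M \<beta> \<alpha>)"
    by (rule sum.mono_neutral_right) (auto simp: P_def M split: if_splits)
  also have "\<dots> = (\<Sum>(\<sigma>, \<tau>, \<omega>)\<in>configs Z \<times> configs Z \<times> configs (- Z).
                    D (merge Z \<sigma> \<omega>) (merge Z \<tau> \<omega>) * M (merge Z \<tau> \<omega>) (merge Z \<sigma> \<omega>))"
    unfolding P_def by (subst sum.reindex_bij_betw[OF bij_betw_merge_pairs, symmetric]) (simp add: case_prod_beta)
  also have "\<dots> = (\<Sum>(\<sigma>, \<tau>, \<omega>)\<in>configs Z \<times> configs Z \<times> configs (- Z).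
                    D (merge Z \<sigma> \<omega>) (merge Z \<tau> \<omega>) * m \<tau> \<sigma>)"
    by (intro sum.cong refl) (auto simp: M merge_agree_compl restrict_merge)
  also have "\<dots> = (\<Sum>\<sigma>\<in>configs Z. \<Sum>\<tau>\<in>configs Z. \<Sum>\<omega>\<in>configs (- Z). D (merge Z \<sigma> \<omega>) (merge Z \<tau> \<omega>) * m \<tau> \<sigma>)"
    by (simp add: sum.cartesian_product)
  also have "\<dots> = mtrace (configs Z) (mmult (configs Z) (ptrace Z D) m)"
    unfolding mtrace_def mmult_def ptrace_def by (simp add: sum_distrib_right)
  finally show ?thesis .
qed

lemma hermitian_ptrace:
  assumes "hermitian_on UNIV D"
  shows "hermitian_on (configs A) (ptrace A D)"
  unfolding hermitian_on_def ptrace_def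
proof (intro ballI)
  fix \<sigma> \<tau> :: "'a \<Rightarrow> 'b"
  have "\<And>\<omega>. D (merge A \<sigma> \<omega>) (merge A \<tau> \<omega>) = cnj (D (merge A \<tau> \<omega>) (merge A \<sigma> \<omega>))"
    using assms unfolding hermitian_on_def by blast
  then show "(\<Sum>\<omega>\<in>configs (- A). D (merge A \<sigma> \<omega>) (merge A \<tau> \<omega>))
           = cnj (\<Sum>\<omega>\<in>configs (- A). D (merge A \<tau> \<omega>) (merge A \<sigma> \<omega>))"
    by simp
qed

lemma bij_betw_merge_fixed:
  "bij_betw (\<lambda>\<sigma>. merge A \<sigma> \<theta>) (configs A) {\<alpha>. \<forall>i. i \<notin> A \<longrightarrow> \<alpha> i = \<theta> i}"
proof (rule bij_betw_byWitness[where f' = "\<lambda>\<alpha>. restrict \<alpha> A"])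
  show "\<forall>\<sigma>\<in>configs A. restrict (merge A \<sigma> \<theta>) A = \<sigma>" by (simp add: restrict_merge)
  show "\<forall>\<alpha>\<in>{\<alpha>. \<forall>i. i \<notin> A \<longrightarrow> \<alpha> i = \<theta> i}. merge A (restrict \<alpha> A) \<theta> = \<alpha>"
    by (auto intro: merge_restrict)
qed (auto simp: merge_def restrict_in_configs)

lemma supported_quadratic_le_opnorm:
  fixes M :: "('s::finite \<Rightarrow> 'q::finite) \<Rightarrow> ('s \<Rightarrow> 'q) \<Rightarrow> complex"
  assumes M: "\<And>\<sigma> \<tau>. M \<sigma> \<tau> = (if \<forall>i. i \<notin> Z \<longrightarrow> \<sigma> i = \<tau> i then m (restrict \<sigma> Z) (restrict \<tau> Z) else 0)"
  shows "cmod (cinner (configs Z) e (mapply (configs Z) m e)) \<le> opnorm UNIV M * Re (cinner (configs Z) e e)"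
proof -
  \<comment> \<open>embed \<open>e\<close> as \<open>e \<otimes> \<delta>\<^sub>\<theta>\<close>, with the complement of \<open>Z\<close> frozen in the configuration \<open>\<theta>\<close>\<close>
  define \<theta> :: "'s \<Rightarrow> 'q" where "\<theta> = undefined"
  define T where "T = {\<alpha>. \<forall>i. i \<notin> Z \<longrightarrow> \<alpha> i = \<theta> i}"
  define w where "w \<alpha> = (if \<alpha> \<in> T then e (restrict \<alpha> Z) else 0)" for \<alpha>
  have inT: "\<sigma> \<in> configs Z \<Longrightarrow> merge Z \<sigma> \<theta> \<in> T" for \<sigma> unfolding T_def merge_def by auto
  have reidx: "(\<Sum>\<alpha>\<in>T. f \<alpha>) = (\<Sum>\<sigma>\<in>configs Z. f (merge Z \<sigma> \<theta>))" for f :: "('s \<Rightarrow> 'q) \<Rightarrow> complex"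
    unfolding T_def using sum.reindex_bij_betw[OF bij_betw_merge_fixed, of f] by simp
  have w_cinner: "cinner UNIV w v = (\<Sum>\<sigma>\<in>configs Z. cnj (e \<sigma>) * v (merge Z \<sigma> \<theta>))" for v
  proof -
    have "cinner UNIV w v = (\<Sum>\<alpha>\<in>T. cnj (w \<alpha>) * v \<alpha>)"
      unfolding cinner_def by (rule sum.mono_neutral_right) (auto simp: w_def)
    then show ?thesis by (simp add: reidx w_def inT restrict_merge)
  qed
  have Mw: "mapply UNIV M w (merge Z \<sigma> \<theta>) = mapply (configs Z) m e \<sigma>" if \<sigma>: "\<sigma> \<in> configs Z" for \<sigma>
  proof -
    have "mapply UNIV M w (merge Z \<sigma> \<theta>) = (\<Sum>\<beta>\<in>T. M (merge Z \<sigma> \<theta>) \<beta> * w \<beta>)"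
      unfolding mapply_def by (rule sum.mono_neutral_right) (auto simp: w_def)
    also have "\<dots> = (\<Sum>\<tau>\<in>configs Z. m \<sigma> \<tau> * e \<tau>)"
      unfolding reidx using \<sigma> by (intro sum.cong refl) (simp add: M w_def inT restrict_merge merge_agree_compl)
    finally show ?thesis unfolding mapply_def .
  qed
  have "cinner UNIV w w = cinner (configs Z) e e"
    unfolding w_cinner by (simp add: cinner_def w_def inT restrict_merge)
  moreover have "cinner UNIV w (mapply UNIV M w) = cinner (configs Z) e (mapply (configs Z) m e)"
    unfolding w_cinner by (simp add: cinner_def Mw)
  ultimately show ?thesis using cmod_quadratic_le_opnorm[of UNIV w M] by simp
qed

lemma mtrace_mult_supported_le:
  fixes M D :: "('s::finite \<Rightarrow> 'q::finite) \<Rightarrow> ('s \<Rightarrow> 'q) \<Rightarrow> complex"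
  assumes "supported_on Z M" and "hermitian_on UNIV D"
  shows "cmod (mtrace UNIV (mmult UNIV D M)) \<le> opnorm UNIV M * trace_norm (configs Z) (ptrace Z D)"
proof -
  obtain m where M: "\<And>\<sigma> \<tau>. M \<sigma> \<tau> = (if \<forall>i. i \<notin> Z \<longrightarrow> \<sigma> i = \<tau> i then m (restrict \<sigma> Z) (restrict \<tau> Z) else 0)"
    using assms(1) unfolding supported_on_def by blast
  show ?thesis
    unfolding mtrace_mult_supported[OF M]
  proof (rule mtrace_mult_le_trace_norm[OF hermitian_ptrace[OF assms(2)]])
    fix e :: "('s \<Rightarrow> 'q) \<Rightarrow> complex" assume "Re (cinner (configs Z) e e) = 1"
    then show "cmod (cinner (configs Z) e (mapply (configs Z) m e)) \<le> opnorm UNIV M"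
      using supported_quadratic_le_opnorm[OF M, of e] by simp
  qed
qed

lemma mtrace_mult_supported_empty:
  fixes M D :: "('s::finite \<Rightarrow> 'q::finite) \<Rightarrow> ('s \<Rightarrow> 'q) \<Rightarrow> complex"
  assumes "supported_on {} M" and "mtrace UNIV D = 0"
  shows "mtrace UNIV (mmult UNIV D M) = 0"
proof -
  \<comment> \<open>a term supported on no site is a multiple of the identity\<close>
  obtain m where "\<And>\<sigma> \<tau>. M \<sigma> \<tau> = (if \<forall>i. \<sigma> i = \<tau> i then m (restrict \<sigma> {}) (restrict \<tau> {}) else 0)"
    using assms(1) unfolding supported_on_def by auto
  then have Mc: "M \<tau> \<sigma> = (if \<tau> = \<sigma> then m (\<lambda>_. undefined) (\<lambda>_. undefined) else 0)" for \<sigma> \<tau>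
    by (simp add: fun_eq_iff restrict_def)
  have "mtrace UNIV (mmult UNIV D M) = mtrace UNIV D * m (\<lambda>_. undefined) (\<lambda>_. undefined)"
    unfolding mtrace_def mmult_def by (simp add: Mc if_distrib sum_distrib_right cong: if_cong)
  then show ?thesis using assms(2) by simp
qed

lemma sum_card_mult_eq_sum_containing:
  fixes f :: "'s::finite set \<Rightarrow> real"
  shows "(\<Sum>Z\<in>UNIV. real (card Z) * f Z) = (\<Sum>i\<in>UNIV. \<Sum>Z\<in>{Z. i \<in> Z}. f Z)"
proof -
  have "(\<Sum>Z\<in>UNIV. real (card Z) * f Z) = (\<Sum>Z\<in>UNIV. \<Sum>i\<in>UNIV. if i \<in> Z then f Z else 0)"
    by (intro sum.cong refl) (simp flip: sum.inter_filter)
  also have "\<dots> = (\<Sum>i\<in>UNIV. \<Sum>Z\<in>UNIV. if i \<in> Z then f Z else 0)" by (rule sum.swap)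
  also have "\<dots> = (\<Sum>i\<in>UNIV. \<Sum>Z\<in>{Z. i \<in> Z}. f Z)" by (simp flip: sum.inter_filter)
  finally show ?thesis .
qed

section \<open>The energy of a state above a gapped ground state\<close>

lemma mtrace_mult_commute: "mtrace S (mmult S X Y) = mtrace S (mmult S Y X)"
  unfolding mtrace_def mmult_def by (subst sum.swap) (simp add: mult.commute)

lemma mtrace_eq_sum_basis:
  fixes S :: "'i::finite set"
  assumes E: "orthonormal_basis S E"
  shows "mtrace S M = (\<Sum>e\<in>E. cinner S e (mapply S M e))"
proof -
  have "(\<Sum>e\<in>E. cinner S e (mapply S M e)) = (\<Sum>a\<in>S. \<Sum>b\<in>S. M a b * (\<Sum>e\<in>E. e b * cnj (e a)))"
    unfolding cinner_def mapply_def
    by (simp add: sum_distrib_left sum_distrib_right sum.swap[of _ E] mult_ac)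
  also have "\<dots> = (\<Sum>a\<in>S. \<Sum>b\<in>S. if b = a then M a b else 0)"
    by (intro sum.cong refl) (simp add: orthonormal_basisD(3)[OF E])
  also have "\<dots> = mtrace S M"
    unfolding mtrace_def using orthonormal_basisD(1)[OF E] by simp
  finally show ?thesis ..
qed

lemma card_multiples_le_one:
  assumes E: "orthonormal_basis S E"
  shows "card {g\<in>E. \<exists>c. g = (\<lambda>a. c * \<psi> a)} \<le> 1"
proof -
  have "g1 = g2" if "g1 \<in> E" "g2 \<in> E" "g1 = (\<lambda>a. c1 * \<psi> a)" "g2 = (\<lambda>a. c2 * \<psi> a)" for g1 g2 c1 c2
  proof -
    have "cinner S g1 g2 = cnj c1 * c2 * cinner S \<psi> \<psi>" and "cinner S g1 g1 = cnj c1 * c1 * cinner S \<psi> \<psi>"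
      using that by (simp_all add: cinner_scale_left cinner_scale_right)
    then have "cinner S g1 g2 \<noteq> 0"
      using orthonormal_basisD(2)[OF E, of g1 g1] orthonormal_basisD(2)[OF E, of g2 g2] that
      by (auto simp: cinner_scale_left cinner_scale_right)
    then show ?thesis using orthonormal_basisD(2)[OF E, of g1 g2] that by (auto split: if_splits)
  qed
  then show ?thesis
    using orthonormal_basisD(1)[OF E] unfolding One_nat_def by (subst card_le_Suc0_iff_eq) auto
qed

lemma sum_quadratic_parallel_le:
  assumes E: "orthonormal_basis S E" and unit: "cinner S \<psi> \<psi> = 1" and psd: "psd_on S \<rho>"
  shows "(\<Sum>g\<in>{g\<in>E. \<exists>c. g = (\<lambda>a. c * \<psi> a)}. Re (cinner S g (mapply S \<rho> g)))
           \<le> Re (cinner S \<psi> (mapply S \<rho> \<psi>))"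
proof -
  define G where "G = {g\<in>E. \<exists>c. g = (\<lambda>a. c * \<psi> a)}"
  have "Re (cinner S g (mapply S \<rho> g)) = Re (cinner S \<psi> (mapply S \<rho> \<psi>))" if gG: "g \<in> G" for g
  proof -
    obtain c where g: "g \<in> E" and c: "g = (\<lambda>a. c * \<psi> a)" using gG unfolding G_def by blast
    have "cnj c * c = 1"
      using orthonormal_basisD(2)[OF E g g] unit unfolding c by (simp add: cinner_scale_left cinner_scale_right)
    then show ?thesis unfolding c mapply_scale
      by (simp add: cinner_scale_left cinner_scale_right mult.assoc[symmetric])
  qed
  then have "(\<Sum>g\<in>G. Re (cinner S g (mapply S \<rho> g))) = real (card G) * Re (cinner S \<psi> (mapply S \<rho> \<psi>))"
    by simp
  also have "\<dots> \<le> Re (cinner S \<psi> (mapply S \<rho> \<psi>))"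
    using card_multiples_le_one[OF E, of \<psi>] psd_quadratic_nonneg[OF psd, of \<psi>] unfolding G_def[symmetric]
    by (intro mult_left_le_one_le) auto
  finally show ?thesis unfolding G_def .
qed

lemma spectral_decomp_eigenvector:
  assumes "spectral_decomp S H E ev" and "e \<in> E" and "a \<in> S"
  shows "mapply S H e a = of_real (ev e) * e a"
  using assms unfolding spectral_decomp_def by (intro mapply_expansion_basis) auto

theorem energy_ge_gap_mult_infidelity:
  fixes H \<rho> :: "'i::finite \<Rightarrow> 'i \<Rightarrow> complex" and \<psi> :: "'i \<Rightarrow> complex"
  assumes herm: "hermitian_on UNIV H" and psd: "psd_on UNIV \<rho>" and tr: "mtrace UNIV \<rho> = 1"
    and unit: "cinner UNIV \<psi> \<psi> = 1" and gs: "mapply UNIV H \<psi> = (\<lambda>_. 0)"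
    and gap: "\<And>\<mu> v. v \<noteq> (\<lambda>_. 0) \<Longrightarrow> mapply UNIV H v = (\<lambda>a. \<mu> * v a) \<Longrightarrow>
                 lmin \<le> Re \<mu> \<or> (\<exists>c. v = (\<lambda>a. c * \<psi> a))"
    and lmin: "lmin > 0"
  shows "lmin * (1 - Re (cinner UNIV \<psi> (mapply UNIV \<rho> \<psi>))) \<le> Re (mtrace UNIV (mmult UNIV \<rho> H))"
proof -
  define F where "F = Re (cinner UNIV \<psi> (mapply UNIV \<rho> \<psi>))"
  define r where "r g = Re (cinner UNIV g (mapply UNIV \<rho> g))" for g
  obtain E ev where sp: "spectral_decomp UNIV H E ev" using hermitian_spectral_decomp[OF herm] by blast
  have E: "orthonormal_basis UNIV E" and fin: "finite E"
    using sp orthonormal_basisD(1) unfolding spectral_decomp_def by auto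
  \<comment> \<open>the basis vectors parallel to the ground state carry energy 0, all others at least \<open>lmin\<close>\<close>
  define G where "G = {g\<in>E. \<exists>c. g = (\<lambda>a. c * \<psi> a)}"
  have r0: "r g \<ge> 0" for g unfolding r_def by (rule psd_quadratic_nonneg[OF psd])
  have energy: "Re (mtrace UNIV (mmult UNIV \<rho> H)) = (\<Sum>g\<in>E. ev g * r g)"
    unfolding mtrace_mult_commute[of UNIV \<rho>] mtrace_mult_spectral[OF sp] r_def by (simp add: Re_sum)
  have "(\<Sum>g\<in>E. r g) = 1" using tr unfolding mtrace_eq_sum_basis[OF E] r_def by (metis Re_sum one_complex.sel(1))
  then have sum_r: "(\<Sum>g\<in>E - G. r g) = 1 - (\<Sum>g\<in>G. r g)"
    using fin by (simp add: G_def sum_diff)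
  have eig: "mapply UNIV H g = (\<lambda>a. of_real (ev g) * g a)" if "g \<in> E" for g
    using spectral_decomp_eigenvector[OF sp that] by blast
  have nz: "g \<noteq> (\<lambda>_. 0)" if "g \<in> E" for g
    using orthonormal_basisD(2)[OF E that that] by (auto simp: cinner_def)
  have G: "ev g = 0" if gG: "g \<in> G" for g
  proof -
    obtain c where g: "g \<in> E" and c: "g = (\<lambda>a. c * \<psi> a)" using gG unfolding G_def by blast
    have "(\<lambda>a. of_real (ev g) * g a) = (\<lambda>_. 0)" using eig[OF g] gs by (simp add: c mapply_scale)
    then show "ev g = 0" using nz[OF g] by (metis mult_eq_0_iff of_real_eq_0_iff)
  qed
  have "(\<Sum>g\<in>G. r g) \<le> F"
    unfolding G_def r_def F_def by (rule sum_quadratic_parallel_le[OF E unit psd])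
  then have "lmin * (1 - F) \<le> lmin * (1 - (\<Sum>g\<in>G. r g))" using lmin by simp
  also have "\<dots> = (\<Sum>g\<in>E - G. lmin * r g)" by (simp add: sum_r flip: sum_distrib_left)
  also have "\<dots> \<le> (\<Sum>g\<in>E - G. ev g * r g)"
  proof (intro sum_mono mult_right_mono r0)
    fix g assume "g \<in> E - G"
    then show "lmin \<le> ev g" using gap[OF nz eig] unfolding G_def by auto
  qed
  also have "\<dots> = (\<Sum>g\<in>E. ev g * r g)"
    using fin G by (intro sum.mono_neutral_left) (auto simp: G_def)
  finally show ?thesis unfolding energy F_def .
qed

section \<open>Local Hamiltonians\<close>

lemma hermitian_hamiltonian:
  assumes "\<And>Z. hermitian_on UNIV (h Z)"
  shows "hermitian_on UNIV (hamiltonian h)"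
  unfolding hermitian_on_def hamiltonian_def
proof (intro ballI)
  fix a b
  have "\<And>Z. h Z a b = cnj (h Z b a)" using assms unfolding hermitian_on_def by blast
  then show "(\<Sum>Z\<in>UNIV. h Z a b) = cnj (\<Sum>Z\<in>UNIV. h Z b a)" by simp
qed

lemma mtrace_mult_hamiltonian:
  "mtrace UNIV (mmult UNIV D (hamiltonian h)) = (\<Sum>Z\<in>UNIV. mtrace UNIV (mmult UNIV D (h Z)))"
proof -
  have "mtrace UNIV (mmult UNIV D (hamiltonian h)) = (\<Sum>a\<in>UNIV. \<Sum>b\<in>UNIV. \<Sum>Z\<in>UNIV. D a b * h Z b a)"
    unfolding mtrace_def mmult_def hamiltonian_def by (simp add: sum_distrib_left)
  also have "\<dots> = (\<Sum>a\<in>UNIV. \<Sum>Z\<in>UNIV. \<Sum>b\<in>UNIV. D a b * h Z b a)"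
    by (intro sum.cong refl) (rule sum.swap)
  also have "\<dots> = (\<Sum>Z\<in>UNIV. mtrace UNIV (mmult UNIV D (h Z)))"
    unfolding mtrace_def mmult_def by (rule sum.swap)
  finally show ?thesis .
qed

lemma mtrace_mult_projector:
  "mtrace UNIV (mmult UNIV (projector \<psi>) H) = cinner UNIV \<psi> (mapply UNIV H \<psi>)"
  unfolding mtrace_def mmult_def projector_def cinner_def mapply_def
  by (subst sum.swap) (simp add: sum_distrib_left mult_ac)

lemma mtrace_mult_diff_projector_ground:
  assumes "mapply UNIV H \<psi> = (\<lambda>_. 0)"
  shows "mtrace UNIV (mmult UNIV (\<lambda>a b. \<rho> a b - projector \<psi> a b) H) = mtrace UNIV (mmult UNIV \<rho> H)"
proof -
  have "mtrace UNIV (mmult UNIV \<rho> H)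
      = mtrace UNIV (mmult UNIV (\<lambda>a b. \<rho> a b - projector \<psi> a b) H) + mtrace UNIV (mmult UNIV (projector \<psi>) H)"
    unfolding mtrace_def mmult_def by (simp add: left_diff_distrib sum_subtractf)
  then show ?thesis unfolding mtrace_mult_projector assms by (simp add: cinner_def)
qed

lemma local_energy_le:
  fixes h :: "'s::{finite,metric_space} set \<Rightarrow> (('s \<Rightarrow> 'q::finite) \<Rightarrow> ('s \<Rightarrow> 'q) \<Rightarrow> complex)"
  assumes supp: "\<And>Z. supported_on Z (h Z)"
    and range: "\<And>Z. diameter Z > R \<Longrightarrow> h Z = (\<lambda>_ _. 0)"
    and strength: "\<And>i. (\<Sum>Z\<in>{Z. i \<in> Z}. opnorm UNIV (h Z)) \<le> J"
    and herm: "hermitian_on UNIV D" and tr: "mtrace UNIV D = 0"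
    and loc: "\<And>A. diameter A \<le> R \<Longrightarrow> trace_norm (configs A) (ptrace A D) \<le> \<epsilon>" and \<epsilon>: "\<epsilon> \<ge> 0"
  shows "cmod (mtrace UNIV (mmult UNIV D (hamiltonian h))) \<le> J * real CARD('s) * \<epsilon>"
proof -
  have term_le: "cmod (mtrace UNIV (mmult UNIV D (h Z))) \<le> real (card Z) * (opnorm UNIV (h Z) * \<epsilon>)" for Z
  proof (cases "Z = {}")
    case True
    then show ?thesis using mtrace_mult_supported_empty[OF _ tr] supp by simp
  next
    case False
    then have "real (card Z) \<ge> 1" by (simp add: Suc_le_eq card_gt_0_iff)
    moreover have "opnorm UNIV (h Z) * \<epsilon> \<ge> 0" using opnorm_nonneg[of UNIV "h Z"] \<epsilon> by simp
    moreover have "cmod (mtrace UNIV (mmult UNIV D (h Z))) \<le> opnorm UNIV (h Z) * \<epsilon>"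
    proof (cases "diameter Z > R")
      case True
      then show ?thesis using range[OF True] \<epsilon> by (simp add: mtrace_def mmult_def opnorm_nonneg)
    next
      case False
      then have "trace_norm (configs Z) (ptrace Z D) \<le> \<epsilon>" using loc by simp
      then show ?thesis
        using mtrace_mult_supported_le[OF supp herm, of Z] opnorm_nonneg[of UNIV "h Z"]
        by (simp add: order_trans mult_left_mono)
    qed
    ultimately show ?thesis by (simp add: mult_le_cancel_right1 order_trans)
  qed
  have "cmod (mtrace UNIV (mmult UNIV D (hamiltonian h))) \<le> (\<Sum>Z\<in>UNIV. cmod (mtrace UNIV (mmult UNIV D (h Z))))"
    unfolding mtrace_mult_hamiltonian by (rule norm_sum)
  also have "\<dots> \<le> (\<Sum>Z\<in>UNIV. real (card Z) * (opnorm UNIV (h Z) * \<epsilon>))" by (intro sum_mono term_le)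
  also have "\<dots> = (\<Sum>i\<in>UNIV. \<Sum>Z\<in>{Z. i \<in> Z}. opnorm UNIV (h Z)) * \<epsilon>"
    by (simp add: sum_card_mult_eq_sum_containing sum_distrib_right)
  also have "\<dots> \<le> (\<Sum>i\<in>(UNIV::'s set). J) * \<epsilon>" by (intro mult_right_mono sum_mono strength \<epsilon>)
  finally show ?thesis by (simp add: mult.commute)
qed

theorem lemma3:
  fixes h :: "'s::{finite,metric_space} set \<Rightarrow> (('s \<Rightarrow> 'q::finite) \<Rightarrow> ('s \<Rightarrow> 'q) \<Rightarrow> complex)"
    and \<Psi>0 :: "('s \<Rightarrow> 'q) \<Rightarrow> complex"
    and R J lmin :: real
  assumes local: "\<And>Z. supported_on Z (h Z) \<and> hermitian_on UNIV (h Z)"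
    and range: "\<And>Z. diameter Z > R \<Longrightarrow> h Z = (\<lambda>_ _. 0)"
    and strength: "\<And>i. (\<Sum>Z\<in>{Z. i \<in> Z}. opnorm UNIV (h Z)) \<le> J"
    and gs_norm: "vnorm UNIV \<Psi>0 = 1"
    and gs_energy: "mapply UNIV (hamiltonian h) \<Psi>0 = (\<lambda>_. 0)"
    and gap_pos: "lmin > 0"
    and spectrum: "\<And>\<mu> v. v \<noteq> (\<lambda>_. 0) \<Longrightarrow> mapply UNIV (hamiltonian h) v = (\<lambda>a. \<mu> * v a) \<Longrightarrow>
                      lmin \<le> Re \<mu> \<or> (\<exists>c. v = (\<lambda>a. c * \<Psi>0 a))"
  shows "unique_gs R (2 * sqrt (J * real CARD('s) / lmin)) \<Psi>0"
  unfolding unique_gs_def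
proof (intro allI impI, elim conjE)
  fix \<epsilon> :: real and \<rho> :: "('s \<Rightarrow> 'q) \<Rightarrow> ('s \<Rightarrow> 'q) \<Rightarrow> complex"
  define D where "D = (\<lambda>a b. \<rho> a b - projector \<Psi>0 a b)"
  define F where "F = Re (cinner UNIV \<Psi>0 (mapply UNIV \<rho> \<Psi>0))"
  assume \<epsilon>: "\<epsilon> \<ge> 0" and "density_matrix \<rho>"
    and loc: "\<forall>A::'s set. diameter A \<le> R \<longrightarrow> trace_norm (configs A) (ptrace A D) \<le> \<epsilon>"
  then have psd: "psd_on UNIV \<rho>" and tr: "mtrace UNIV \<rho> = 1" unfolding density_matrix_def by auto
  have unit: "cinner UNIV \<Psi>0 \<Psi>0 = 1" by (rule cinner_self_eq_1_of_vnorm[OF gs_norm])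
  have hermD: "hermitian_on UNIV D"
    unfolding D_def using psd by (intro hermitian_diff_projector) (simp add: psd_on_def)
  have trD: "mtrace UNIV D = 0" unfolding D_def mtrace_diff_projector tr unit by simp
  have hermH: "hermitian_on UNIV (hamiltonian h)" using local by (intro hermitian_hamiltonian) blast
  have "lmin * (1 - F) \<le> Re (mtrace UNIV (mmult UNIV D (hamiltonian h)))"
    using energy_ge_gap_mult_infidelity[OF hermH psd tr unit gs_energy spectrum gap_pos]
    unfolding F_def D_def mtrace_mult_diff_projector_ground[OF gs_energy] .
  also have "\<dots> \<le> cmod (mtrace UNIV (mmult UNIV D (hamiltonian h)))" by (rule complex_Re_le_cmod)
  also have "\<dots> \<le> J * real CARD('s) * \<epsilon>"
    by (rule local_energy_le[OF _ range strength hermD trD _ \<epsilon>]) (use local loc in auto)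
  finally have "1 - F \<le> J * real CARD('s) / lmin * \<epsilon>" using gap_pos by (simp add: field_simps)
  then have "sqrt (1 - F) \<le> sqrt (J * real CARD('s) / lmin) * sqrt \<epsilon>"
    by (metis real_sqrt_le_mono real_sqrt_mult)
  then show "trace_norm UNIV D \<le> 2 * sqrt (J * real CARD('s) / lmin) * sqrt \<epsilon>"
    using trace_distance_pure_state[OF psd tr unit] unfolding D_def F_def by simp
qed

end
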